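(* Let $\bm{\mu}\in X^{\mathcal{L}(\mathcal{T})}$ satisfy (i) $V_{s_0}(\bm{\mu})\neq\theta$ and (ii) the maximizer $\bm{w}\in\Delta$ of $\inf_{\bm{\lambda}\in\mathrm{Alt}(\bm{\mu})}\sum_\ell w_\ell d(\mu_\ell,\lambda_\ell)$ is unique. Then for every $\epsilon>0$ there exists $\xi>0$ such that for all $\bm{\mu}'\in X^{\mathcal{L}(\mathcal{T})}$ with $\mu'_\ell\in[\mu_\ell-\xi,\mu_\ell+\xi]$ for every $\ell\in\mathcal{L}(\mathcal{T})$, \[\max_{\ell\in\mathcal{L}(\mathcal{T})}|w^{s_0}_\ell(\bm{\mu}')-w^{s_0}_\ell(\bm{\mu})|<\epsilon.\]
   Context: $\mathcal{T}$: finite rooted tree, node set $S$, root $s_0$, children $\mathcal{C}(s)$, leaves $\mathcal{L}(\mathcal{T})$, $\mathcal{D}(s)$ leaves descending from $s$; internal labels $L(s)\in\{\text{MAX},\text{MIN}\}$. $X\subseteq\mathbb{R}$ mean-parameter set of a one-parameter exponential family, $d(x,y)$ KL divergence between members with means $x,y$, threshold $\theta\in X$. $V_s(\bm{\lambda})=\lambda_s$ at leaves, max/min of children's values at MAX/MIN nodes; $a_s=$'win' iff $V_s\ge\theta$. $\Delta$ simplex over leaves; $\mathrm{Alt}(\bm{\mu})=\{\bm{\lambda}\in X^{\mathcal{L}(\mathcal{T})}:a_{s_0}(\bm{\lambda})\neq a_{s_0}(\bm{\mu})\}$. For any mean vector $\bm{\nu}$ (applied to both $\bm{\mu}$ and $\bm{\mu}'$),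 recursive weights: $a^*=a_{s_0}(\bm{\nu})$; $P=$MAX, $Q=$MIN if $a^*=$'win', swapped if 'lose'. Leaf $s$: $w^s_s=1$, $d_s=d(\nu_s,\theta)$ if ($a^*=$'win', $\nu_s\ge\theta$) or ($a^*=$'lose', $\nu_s<\theta$), else $0$. $L(s)=P$: $d_s=\max_c d_c$, $c^*(s)\in\arg\max_c d_c$, if $d_s>0$: $w^s=w^{c^*(s)}$ on $\mathcal{D}(c^*(s))$, $0$ elsewhere. $L(s)=Q$, all $d_c>0$: $d_s=(\sum_c1/d_c)^{-1}$, $w^s_\ell=\frac{w^c_\ell/d_c}{\sum_{c'}1/d_{c'}}$ on $\mathcal{D}(c)$. $L(s)=Q$ otherwise: $d_s=0$. Internal $s$ with $d_s=0$: $\bm{w}^s$ arbitrary probability vector on $\mathcal{D}(s)$. (These recursive values solve $\max_{\bm{w}}\inf_{\bm{\lambda}\in\mathrm{Alt}}\sum_\ell w_\ell d(\nu_\ell,\lambda_\ell)$.) *)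

theory Defs
  imports "HOL-Probability.Probability"
begin

definition log_partition :: "real measure \<Rightarrow> real \<Rightarrow> real" where
  "log_partition N \<eta> = ln (\<integral>t. exp (\<eta> * t) \<partial>N)"

definition ef_dens :: "real measure \<Rightarrow> real \<Rightarrow> real \<Rightarrow> real" where
  "ef_dens N \<eta> t = exp (\<eta> * t - log_partition N \<eta>)"

definition expfam :: "real measure \<Rightarrow> real set \<Rightarrow> bool" where
  "expfam N \<Theta> \<longleftrightarrow> sets N = sets borel \<and> sigma_finite_measure N \<and>
     open \<Theta> \<and> is_interval \<Theta> \<and> \<Theta> \<noteq> {} \<and>
     (\<forall>\<eta>\<in>\<Theta>. integrable N (\<lambda>t. exp (\<eta> * t))) \<and>
     \<not> (\<exists>c. AE t in N. t = c)"

definition ef_mean :: "real measure \<Rightarrow> real \<Rightarrow> real" where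
  "ef_mean N \<eta> = (\<integral>t. t * ef_dens N \<eta> t \<partial>N)"

definition mean_set :: "real measure \<Rightarrow> real set \<Rightarrow> real set" where
  "mean_set N \<Theta> = ef_mean N ` \<Theta>"

definition nat_param :: "real measure \<Rightarrow> real set \<Rightarrow> real \<Rightarrow> real" where
  "nat_param N \<Theta> x = (THE \<eta>. \<eta> \<in> \<Theta> \<and> ef_mean N \<eta> = x)"

definition KL :: "real measure \<Rightarrow> real set \<Rightarrow> real \<Rightarrow> real \<Rightarrow> real" where
  "KL N \<Theta> x y = (\<integral>t. ef_dens N (nat_param N \<Theta> x) t *
      ln (ef_dens N (nat_param N \<Theta> x) t / ef_dens N (nat_param N \<Theta> y) t) \<partial>N)"

datatype node_label = MAXnode | MINnode

datatype 'l gtree = Leaf 'l | Node node_label "'l gtree list"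

fun leaves :: "'l gtree \<Rightarrow> 'l set" where
  "leaves (Leaf l) = {l}"
| "leaves (Node k cs) = \<Union> (set (map leaves cs))"

fun leaf_list :: "'l gtree \<Rightarrow> 'l list" where
  "leaf_list (Leaf l) = [l]"
| "leaf_list (Node k cs) = concat (map leaf_list cs)"

fun subtrees :: "'l gtree \<Rightarrow> 'l gtree set" where
  "subtrees (Leaf l) = {Leaf l}"
| "subtrees (Node k cs) = insert (Node k cs) (\<Union> (set (map subtrees cs)))"

fun wf_tree :: "'l gtree \<Rightarrow> bool" where
  "wf_tree (Leaf l) = True"
| "wf_tree (Node k cs) = (cs \<noteq> [] \<and> (\<forall>c\<in>set cs. wf_tree c))"

definition game_tree :: "'l gtree \<Rightarrow> bool" where
  "game_tree T \<longleftrightarrow> wf_tree T \<and> distinct (leaf_list T)"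

fun val :: "('l \<Rightarrow> real) \<Rightarrow> 'l gtree \<Rightarrow> real" where
  "val lam (Leaf l) = lam l"
| "val lam (Node MAXnode cs) = Max (set (map (val lam) cs))"
| "val lam (Node MINnode cs) = Min (set (map (val lam) cs))"

definition wins :: "real \<Rightarrow> ('l \<Rightarrow> real) \<Rightarrow> 'l gtree \<Rightarrow> bool" where
  "wins \<theta> lam T \<longleftrightarrow> \<theta> \<le> val lam T"

text \<open>Recursive values d_s; parameter win = a*; a node has label P iff (label = MAX) = win.\<close>
fun dval :: "(real \<Rightarrow> real \<Rightarrow> real) \<Rightarrow> real \<Rightarrow> bool \<Rightarrow> ('l \<Rightarrow> real) \<Rightarrow> 'l gtree \<Rightarrow> real" where
  "dval dv \<theta> win \<nu> (Leaf l) =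
     (if (win \<and> \<theta> \<le> \<nu> l) \<or> (\<not> win \<and> \<nu> l < \<theta>) then dv (\<nu> l) \<theta> else 0)"
| "dval dv \<theta> win \<nu> (Node k cs) =
     (if (k = MAXnode) = win then Max (set (map (dval dv \<theta> win \<nu>) cs))
      else if (\<forall>c\<in>set cs. 0 < dval dv \<theta> win \<nu> c)
        then inverse (\<Sum>c\<in>set cs. 1 / dval dv \<theta> win \<nu> c)
      else 0)"

text \<open>w s is the weight vector w^s, a function on leaf names that vanishes outside D(s).
  The predicate expresses that w is an admissible result of the recursive construction
  (all admissible choices of argmax children and of arbitrary vectors where d_s = 0).\<close>
definition valid_weights ::
  "(real \<Rightarrow> real \<Rightarrow> real) \<Rightarrow> real \<Rightarrow> ('l \<Rightarrow> real) \<Rightarrow> 'l gtree \<Rightarrow> ('l gtree \<Rightarrow> 'l \<Rightarrow> real) \<Rightarrow> bool"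
where
  "valid_weights dv \<theta> \<nu> T w \<longleftrightarrow>
    (\<forall>s\<in>subtrees T.
      (case s of
        Leaf l \<Rightarrow> w s = (\<lambda>m. if m = l then 1 else 0)
      | Node k cs \<Rightarrow>
          (((k = MAXnode) = wins \<theta> \<nu> T \<and> 0 < dval dv \<theta> (wins \<theta> \<nu> T) \<nu> s) \<longrightarrow>
             (\<exists>c\<in>set cs. dval dv \<theta> (wins \<theta> \<nu> T) \<nu> c = dval dv \<theta> (wins \<theta> \<nu> T) \<nu> s \<and>
                 w s = (\<lambda>m. if m \<in> leaves c then w c m else 0)))
        \<and> (((k = MAXnode) \<noteq> wins \<theta> \<nu> T \<and> (\<forall>c\<in>set cs. 0 < dval dv \<theta> (wins \<theta> \<nu> T) \<nu> c)) \<longrightarrow>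
             w s = (\<lambda>m. \<Sum>c\<in>set cs. if m \<in> leaves c then
                  (w c m / dval dv \<theta> (wins \<theta> \<nu> T) \<nu> c) /
                  (\<Sum>c'\<in>set cs. 1 / dval dv \<theta> (wins \<theta> \<nu> T) \<nu> c') else 0))
        \<and> (dval dv \<theta> (wins \<theta> \<nu> T) \<nu> s = 0 \<longrightarrow>
             (\<forall>m. 0 \<le> w s m) \<and> (\<forall>m. m \<notin> leaves s \<longrightarrow> w s m = 0) \<and>
             (\<Sum>m\<in>leaves s. w s m) = 1)))"

definition leaf_simplex :: "'l set \<Rightarrow> ('l \<Rightarrow> real) set" where
  "leaf_simplex L = {w. (\<forall>l\<in>L. 0 \<le> w l) \<and> (\<forall>l. l \<notin> L \<longrightarrow> w l = 0) \<and> sum w L = 1}"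

definition Alt :: "real set \<Rightarrow> real \<Rightarrow> 'l gtree \<Rightarrow> ('l \<Rightarrow> real) \<Rightarrow> ('l \<Rightarrow> real) set" where
  "Alt X \<theta> T \<mu> = {lam. (\<forall>l\<in>leaves T. lam l \<in> X) \<and> wins \<theta> lam T \<noteq> wins \<theta> \<mu> T}"

definition objective ::
  "(real \<Rightarrow> real \<Rightarrow> real) \<Rightarrow> real set \<Rightarrow> real \<Rightarrow> 'l gtree \<Rightarrow> ('l \<Rightarrow> real) \<Rightarrow> ('l \<Rightarrow> real) \<Rightarrow> real"
where
  "objective dv X \<theta> T \<mu> w = (INF lam\<in>Alt X \<theta> T \<mu>. \<Sum>l\<in>leaves T. w l * dv (\<mu> l) (lam l))"

end

theory Submission
  imports Defs
begin

text \<open>Only a few properties of the exponential-family KL divergence matter, all consequences of the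
  strict convexity of the log-partition function: it is nonnegative, vanishes exactly on the
  diagonal, grows as its second argument moves away from the first, is continuous in its first
  argument, and \<open>d(x, \<theta>)\<close> is approached by \<open>d(x, y)\<close> with \<open>y < \<theta>\<close>.
  From these, by induction over the tree, \<open>d\<^sub>s\<close> is a lower bound for the cost of every
  alternative under any admissible \<open>w\<^sup>s\<close> (an alternative must reverse the outcome at the chosen child
  of a P node, at some child of a Q node), and an upper bound for the optimal cost of any weight
  vector (glue near-optimal alternatives of the children). So every admissible \<open>w\<^sup>s\<^sub>0(\<mu>)\<close> is a
  maximizer, and uniqueness makes it independent of all choices; going down the tree, it forces
  a unique argmax child at every P node with \<open>d\<^sub>s > 0\<close>, since two argmax children would give
  admissible weights with disjoint supports.

  Since \<open>V\<^sub>s\<^sub>0(\<mu>) \<noteq> \<theta>\<close>, the outcome \<open>a\<^sup>*\<close> is locally constant and \<open>d\<^sub>s\<^sub>0 > 0\<close>. The values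
  \<open>d\<^sub>s\<close> depend continuously on the means, so near \<open>\<mu>\<close> the unique argmax children remain the
  argmax children, and the weights at Q nodes are continuous in those of the children.\<close>

lemma add_one_less_exp:
  fixes x :: real
  assumes "x \<noteq> 0"
  shows "1 + x < exp x"
proof (cases "0 < 1 + x")
  case True
  have "ln (1 + x) \<le> x" using ln_le_minus_one[OF True] by simp
  moreover have "ln (1 + x) \<noteq> x" using ln_eq_minus_one[OF True] assms by auto
  ultimately show ?thesis using True by (metis exp_less_mono exp_ln order_less_le)
next
  case False
  then show ?thesis using exp_gt_zero[of x] by linarith
qed

lemma exp_above_tangent: "exp a * (1 + (b - a)) \<le> exp (b :: real)"
proof -
  have "exp a * (1 + (b - a)) \<le> exp a * exp (b - a)"
    using exp_ge_add_one_self[of "b - a"] by (intro mult_left_mono) auto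
  then show ?thesis by (simp add: exp_diff)
qed

lemma exp_above_tangent_strict: "a \<noteq> b \<Longrightarrow> exp a * (1 + (b - a)) < exp (b :: real)"
proof -
  assume "a \<noteq> b"
  then have "exp a * (1 + (b - a)) < exp a * exp (b - a)"
    using add_one_less_exp[of "b - a"] by (intro mult_strict_left_mono) auto
  then show ?thesis by (simp add: exp_diff)
qed

lemma abs_mult_exp_le:
  fixes t h e :: real
  assumes "0 < h"
  shows "\<bar>t\<bar> * exp (e * t) \<le> (exp ((e + h) * t) + exp ((e - h) * t)) / h"
proof -
  have "h * \<bar>t\<bar> \<le> exp (h * \<bar>t\<bar>)" using exp_ge_add_one_self[of "h * \<bar>t\<bar>"] by linarith
  also have "\<dots> \<le> exp (h * t) + exp (- (h * t))" by (cases "t \<ge> 0") auto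
  finally have "h * \<bar>t\<bar> * exp (e * t) \<le> (exp (h * t) + exp (- (h * t))) * exp (e * t)"
    by (intro mult_right_mono) auto
  also have "\<dots> = exp ((e + h) * t) + exp ((e - h) * t)"
    by (simp add: algebra_simps flip: exp_add)
  finally show ?thesis using assms by (simp add: field_simps)
qed

lemma tendsto_Max_image:
  fixes f :: "'i \<Rightarrow> 'a \<Rightarrow> real"
  assumes "finite S" "S \<noteq> {}" "\<And>a. a \<in> S \<Longrightarrow> ((\<lambda>i. f i a) \<longlongrightarrow> g a) F"
  shows "((\<lambda>i. Max (f i ` S)) \<longlongrightarrow> Max (g ` S)) F"
  using assms by (induction S rule: finite_ne_induct) (auto intro: tendsto_max)

lemma tendsto_Min_image:
  fixes f :: "'i \<Rightarrow> 'a \<Rightarrow> real"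
  assumes "finite S" "S \<noteq> {}" "\<And>a. a \<in> S \<Longrightarrow> ((\<lambda>i. f i a) \<longlongrightarrow> g a) F"
  shows "((\<lambda>i. Min (f i ` S)) \<longlongrightarrow> Min (g ` S)) F"
  using assms by (induction S rule: finite_ne_induct) (auto intro: tendsto_min)

lemma exists_le_harmonic_share:
  fixes d W :: "'a \<Rightarrow> real"
  assumes "finite C" "C \<noteq> {}" "\<And>c. c \<in> C \<Longrightarrow> 0 < d c"
  shows "\<exists>c\<in>C. d c * W c \<le> sum W C / (\<Sum>c\<in>C. 1 / d c)"
proof (rule ccontr)
  define H where "H = (\<Sum>c\<in>C. 1 / d c)"
  have "0 < H" unfolding H_def using assms by (intro sum_pos) auto
  assume contra: "\<not> ?thesis"
  have "sum W C / H * (1 / d c) < W c" if "c \<in> C" for c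
  proof -
    have "sum W C / H < W c * d c" using contra that by (auto simp: H_def not_le mult.commute)
    then show ?thesis using assms(3)[OF that] \<open>0 < H\<close> by (simp add: field_simps)
  qed
  then have "(\<Sum>c\<in>C. sum W C / H * (1 / d c)) < sum W C"
    using assms(1,2) by (intro sum_strict_mono) auto
  moreover have "(\<Sum>c\<in>C. sum W C / H * (1 / d c)) = sum W C / H * H"
    by (simp only: H_def sum_distrib_left)
  ultimately show False using \<open>0 < H\<close> by simp
qed

lemma leaf_simplex_nonneg: "f \<in> leaf_simplex S \<Longrightarrow> 0 \<le> f m"
  unfolding leaf_simplex_def by (cases "m \<in> S") auto

lemma leaf_simplex_eqI:
  assumes "f \<in> leaf_simplex S" "g \<in> leaf_simplex S" "\<And>l. l \<in> S \<Longrightarrow> f l = g l"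
  shows "f = g"
proof
  fix l show "f l = g l" using assms by (cases "l \<in> S") (auto simp: leaf_simplex_def)
qed

section \<open>Exponential families\<close>

locale exp_family =
  fixes N :: "real measure" and \<Theta> :: "real set"
  assumes expfam: "expfam N \<Theta>"
begin

abbreviation "A \<equiv> log_partition N"
abbreviation "mean \<equiv> ef_mean N"
abbreviation "X \<equiv> mean_set N \<Theta>"
abbreviation "param \<equiv> nat_param N \<Theta>"

lemma sets_N [measurable_cong]: "sets N = sets borel"
  and open_Theta: "open \<Theta>"
  and interval_Theta: "is_interval \<Theta>"
  and integrable_exp: "\<eta> \<in> \<Theta> \<Longrightarrow> integrable N (\<lambda>t. exp (\<eta> * t))"
  and not_AE_const: "\<not> (AE t in N. t = c)"
  using expfam by (auto simp: expfam_def)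

definition partition_fun :: "real \<Rightarrow> real" where
  "partition_fun \<eta> = (\<integral>t. exp (\<eta> * t) \<partial>N)"

definition moment_fun :: "real \<Rightarrow> real" where
  "moment_fun \<eta> = (\<integral>t. t * exp (\<eta> * t) \<partial>N)"

lemma log_partition_eq: "A \<eta> = ln (partition_fun \<eta>)"
  by (simp add: log_partition_def partition_fun_def)

lemma integrable_mult_exp:
  assumes "\<eta> \<in> \<Theta>"
  shows "integrable N (\<lambda>t. t * exp (\<eta> * t))"
proof -
  obtain h where h: "0 < h" "\<eta> + h \<in> \<Theta>" "\<eta> - h \<in> \<Theta>"
  proof -
    obtain r where "0 < r" "ball \<eta> r \<subseteq> \<Theta>"
      using open_Theta assms open_contains_ball by blast
    then show thesis by (intro that[of "r / 2"]) (auto simp: dist_real_def)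
  qed
  show ?thesis
  proof (rule Bochner_Integration.integrable_bound)
    show "integrable N (\<lambda>t. (exp ((\<eta> + h) * t) + exp ((\<eta> - h) * t)) / h)"
      using h by (intro integrable_divide Bochner_Integration.integrable_add integrable_exp)
    show "AE t in N. norm (t * exp (\<eta> * t)) \<le> norm ((exp ((\<eta> + h) * t) + exp ((\<eta> - h) * t)) / h)"
      using abs_mult_exp_le[OF h(1)] h(1) by (auto simp: abs_mult)
  qed measurable
qed

lemma partition_fun_pos:
  assumes "\<eta> \<in> \<Theta>"
  shows "0 < partition_fun \<eta>"
proof -
  have "partition_fun \<eta> \<noteq> 0"
  proof
    assume "partition_fun \<eta> = 0"
    then have "AE t in N. exp (\<eta> * t) = 0"
      using integral_nonneg_eq_0_iff_AE[OF integrable_exp[OF assms]] by (simp add: partition_fun_def)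
    then have "AE t in N. t = 0" by (auto elim: AE_mp)
    with not_AE_const show False by blast
  qed
  moreover have "0 \<le> partition_fun \<eta>" unfolding partition_fun_def by (intro integral_nonneg_AE) auto
  ultimately show ?thesis by simp
qed

lemma ef_dens_eq: "\<eta> \<in> \<Theta> \<Longrightarrow> ef_dens N \<eta> t = exp (\<eta> * t) / partition_fun \<eta>"
  using partition_fun_pos by (simp add: ef_dens_def log_partition_eq exp_diff)

lemma ef_dens_pos: "0 < ef_dens N \<eta> t"
  by (simp add: ef_dens_def)

lemma mean_eq: "\<eta> \<in> \<Theta> \<Longrightarrow> mean \<eta> = moment_fun \<eta> / partition_fun \<eta>"
  by (simp add: ef_mean_def ef_dens_eq moment_fun_def times_divide_eq_right)

lemma integrable_ef_dens:
  assumes "\<eta> \<in> \<Theta>"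
  shows "integrable N (ef_dens N \<eta>)"
proof -
  have "ef_dens N \<eta> = (\<lambda>t. exp (\<eta> * t) / partition_fun \<eta>)"
    using ef_dens_eq[OF assms] by auto
  then show ?thesis using integrable_exp[OF assms] by simp
qed

lemma integrable_mult_ef_dens: "\<eta> \<in> \<Theta> \<Longrightarrow> integrable N (\<lambda>t. t * ef_dens N \<eta> t)"
  by (simp add: ef_dens_eq integrable_mult_exp times_divide_eq_right)

lemma integral_ef_dens: "\<eta> \<in> \<Theta> \<Longrightarrow> (\<integral>t. ef_dens N \<eta> t \<partial>N) = 1"
  using partition_fun_pos[of \<eta>] by (simp add: ef_dens_eq partition_fun_def)

text \<open>Strict convexity of the log-partition function, whose derivative is the mean: the proof
  integrates the tangent inequality for \<open>exp\<close> at \<open>d * c\<close>, evaluated at \<open>d * t\<close> and strict off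
  \<open>t = c\<close>, against \<open>exp (\<eta>\<^sub>1 * t)\<close>.\<close>
lemma log_partition_above_tangent:
  assumes \<eta>1: "\<eta>1 \<in> \<Theta>" and \<eta>2: "\<eta>2 \<in> \<Theta>" and "\<eta>1 \<noteq> \<eta>2"
  shows "(\<eta>2 - \<eta>1) * mean \<eta>1 < A \<eta>2 - A \<eta>1"
proof -
  define d where "d = \<eta>2 - \<eta>1"
  define c where "c = mean \<eta>1"
  have "d \<noteq> 0" using assms by (simp add: d_def)
  define g where "g t = exp (\<eta>2 * t) - exp (d * c) * (exp (\<eta>1 * t) + d * (t * exp (\<eta>1 * t) - c * exp (\<eta>1 * t)))" for t
  have g_eq: "g t = exp (\<eta>1 * t) * (exp (d * t) - exp (d * c) * (1 + (d * t - d * c)))" for t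
    by (simp add: g_def d_def algebra_simps flip: exp_add)
  have g_nonneg: "0 \<le> g t" for t unfolding g_eq using exp_above_tangent[of "d * c" "d * t"] by simp
  have integrable: "integrable N (\<lambda>t. exp (\<eta>1 * t))" "integrable N (\<lambda>t. exp (\<eta>2 * t))"
    "integrable N (\<lambda>t. t * exp (\<eta>1 * t))"
    using \<eta>1 \<eta>2 integrable_exp integrable_mult_exp by auto
  then have "integrable N g" unfolding g_def by auto
  have "moment_fun \<eta>1 - c * partition_fun \<eta>1 = 0"
    using partition_fun_pos[OF \<eta>1] by (simp add: c_def mean_eq[OF \<eta>1])
  then have integral_g: "(\<integral>t. g t \<partial>N) = partition_fun \<eta>2 - exp (d * c) * partition_fun \<eta>1"
    unfolding g_def partition_fun_def moment_fun_def using integrable by simp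
  have "(\<integral>t. g t \<partial>N) \<noteq> 0"
  proof
    assume "(\<integral>t. g t \<partial>N) = 0"
    then have "AE t in N. g t = 0"
      using integral_nonneg_eq_0_iff_AE[OF \<open>integrable N g\<close>] g_nonneg by auto
    then have "AE t in N. t = c"
    proof (rule AE_mp, intro AE_I2 impI)
      fix t assume "g t = 0"
      then show "t = c"
        using exp_above_tangent_strict[of "d * c" "d * t"] \<open>d \<noteq> 0\<close> unfolding g_eq by (cases "t = c") auto
    qed
    with not_AE_const show False by blast
  qed
  moreover have "0 \<le> (\<integral>t. g t \<partial>N)" using g_nonneg by (intro integral_nonneg_AE) auto
  ultimately have "exp (d * c) * partition_fun \<eta>1 < partition_fun \<eta>2" using integral_g by simp
  then have "ln (exp (d * c) * partition_fun \<eta>1) < ln (partition_fun \<eta>2)"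
    using partition_fun_pos[OF \<eta>1] partition_fun_pos[OF \<eta>2] by (subst ln_less_cancel_iff) auto
  then show ?thesis
    using partition_fun_pos[OF \<eta>1] by (simp add: ln_mult log_partition_eq d_def c_def)
qed

lemma mean_strict_mono: "strict_mono_on \<Theta> mean"
proof (rule strict_mono_onI)
  fix \<eta>1 \<eta>2 assume \<eta>: "\<eta>1 \<in> \<Theta>" "\<eta>2 \<in> \<Theta>" "\<eta>1 < \<eta>2"
  have "(\<eta>2 - \<eta>1) * mean \<eta>1 < A \<eta>2 - A \<eta>1"
    using \<eta> by (intro log_partition_above_tangent) auto
  moreover have "(\<eta>1 - \<eta>2) * mean \<eta>2 < A \<eta>1 - A \<eta>2"
    using \<eta> by (intro log_partition_above_tangent) auto
  ultimately have "(\<eta>2 - \<eta>1) * mean \<eta>1 < (\<eta>2 - \<eta>1) * mean \<eta>2"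
    by (simp add: algebra_simps)
  then show "mean \<eta>1 < mean \<eta>2" using \<open>\<eta>1 < \<eta>2\<close> by simp
qed

lemma mean_less_iff: "\<eta>1 \<in> \<Theta> \<Longrightarrow> \<eta>2 \<in> \<Theta> \<Longrightarrow> mean \<eta>1 < mean \<eta>2 \<longleftrightarrow> \<eta>1 < \<eta>2"
  using strict_mono_on_less[OF mean_strict_mono] by blast

lemma mean_le_iff: "\<eta>1 \<in> \<Theta> \<Longrightarrow> \<eta>2 \<in> \<Theta> \<Longrightarrow> mean \<eta>1 \<le> mean \<eta>2 \<longleftrightarrow> \<eta>1 \<le> \<eta>2"
  using mean_less_iff by (meson not_le)

lemma param_mean:
  assumes "\<eta> \<in> \<Theta>"
  shows "param (mean \<eta>) = \<eta>"
  unfolding nat_param_def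
proof (rule the_equality)
  fix \<eta>' assume "\<eta>' \<in> \<Theta> \<and> mean \<eta>' = mean \<eta>"
  then show "\<eta>' = \<eta>"
    using strict_mono_on_imp_inj_on[OF mean_strict_mono] assms by (auto dest: inj_onD)
qed (use assms in simp)

lemma param_in: "x \<in> X \<Longrightarrow> param x \<in> \<Theta>"
  and mean_param: "x \<in> X \<Longrightarrow> mean (param x) = x"
  by (auto simp: mean_set_def param_mean)

lemma param_le_iff: "x \<in> X \<Longrightarrow> y \<in> X \<Longrightarrow> param x \<le> param y \<longleftrightarrow> x \<le> y"
  by (metis mean_le_iff mean_param param_in)

lemma KL_eq:
  assumes x: "x \<in> X" and y: "y \<in> X"
  shows "KL N \<Theta> x y = (param x - param y) * x - A (param x) + A (param y)"
proof -
  define a b where "a = param x" and "b = param y"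
  have a: "a \<in> \<Theta>" "mean a = x" and b: "b \<in> \<Theta>"
    using x y by (auto simp: a_def b_def param_in mean_param)
  have log_ratio: "ln (ef_dens N a t / ef_dens N b t) = (a - b) * t - A a + A b" for t
    using ef_dens_pos by (simp add: ln_div ef_dens_def algebra_simps)
  have "ef_dens N a t * ln (ef_dens N a t / ef_dens N b t)
      = (a - b) * (t * ef_dens N a t) + (A b - A a) * ef_dens N a t" for t
    unfolding log_ratio by (simp add: algebra_simps)
  then have "KL N \<Theta> x y = (\<integral>t. (a - b) * (t * ef_dens N a t) + (A b - A a) * ef_dens N a t \<partial>N)"
    unfolding KL_def a_def[symmetric] b_def[symmetric] by presburger
  also have "\<dots> = (a - b) * mean a + (A b - A a)"
    using a b by (simp add: integrable_ef_dens integrable_mult_ef_dens integral_ef_dens ef_mean_def)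
  finally show ?thesis using a by (simp add: a_def b_def)
qed

lemma KL_self: "KL N \<Theta> x x = 0"
  using ef_dens_pos by (simp add: KL_def less_imp_neq[symmetric])

lemma KL_pos:
  assumes "x \<in> X" "y \<in> X" "x \<noteq> y"
  shows "0 < KL N \<Theta> x y"
proof -
  have "param x \<noteq> param y" using assms by (metis mean_param)
  then have "(param y - param x) * mean (param x) < A (param y) - A (param x)"
    using assms by (intro log_partition_above_tangent param_in) auto
  then show ?thesis using assms by (simp add: KL_eq mean_param algebra_simps)
qed

lemma KL_nonneg: "x \<in> X \<Longrightarrow> y \<in> X \<Longrightarrow> 0 \<le> KL N \<Theta> x y"
  using KL_pos[of x y] by (cases "x = y") (auto simp: KL_self)

lemma KL_three_point:
  assumes "x \<in> X" "y \<in> X" "z \<in> X"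
  shows "KL N \<Theta> x z = KL N \<Theta> x y + KL N \<Theta> y z + (param y - param z) * (x - y)"
  using assms by (simp add: KL_eq algebra_simps)

lemma KL_mono_above:
  assumes "x \<in> X" "y \<in> X" "z \<in> X" "x \<le> y" "y \<le> z"
  shows "KL N \<Theta> x y \<le> KL N \<Theta> x z"
proof -
  have "0 \<le> (param y - param z) * (x - y)"
    using assms by (intro mult_nonpos_nonpos) (auto simp: param_le_iff)
  then show ?thesis using KL_three_point[OF assms(1-3)] KL_nonneg[OF assms(2,3)] by linarith
qed

lemma KL_mono_below:
  assumes "x \<in> X" "y \<in> X" "z \<in> X" "z \<le> y" "y \<le> x"
  shows "KL N \<Theta> x y \<le> KL N \<Theta> x z"
proof -
  have "0 \<le> (param y - param z) * (x - y)"
    using assms by (intro mult_nonneg_nonneg) (auto simp: param_le_iff)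
  then show ?thesis using KL_three_point[OF assms(1-3)] KL_nonneg[OF assms(2,3)] by linarith
qed

lemma partition_fun_convex: "convex_on \<Theta> partition_fun"
proof (rule convex_onI)
  show "convex \<Theta>" using interval_Theta is_interval_convex by blast
  fix u x y :: real assume xy: "x \<in> \<Theta>" "y \<in> \<Theta>" and u: "0 < u" "u < 1"
  have "(1 - u) *\<^sub>R x + u *\<^sub>R y \<in> \<Theta>"
    using convexD[OF \<open>convex \<Theta>\<close> xy, of "1 - u" u] u by simp
  have "exp (((1 - u) * x + u * y) * t) \<le> (1 - u) * exp (x * t) + u * exp (y * t)" for t
    using convex_onD[OF exp_convex, of u "x * t" "y * t"] u by (simp add: algebra_simps)
  then have "partition_fun ((1 - u) * x + u * y) \<le> (\<integral>t. (1 - u) * exp (x * t) + u * exp (y * t) \<partial>N)"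
    unfolding partition_fun_def using xy \<open>(1 - u) *\<^sub>R x + u *\<^sub>R y \<in> \<Theta>\<close>
    by (intro integral_mono Bochner_Integration.integrable_add integrable_mult_right integrable_exp) auto
  also have "\<dots> = (1 - u) * partition_fun x + u * partition_fun y"
    using xy integrable_exp by (simp add: partition_fun_def)
  finally show "partition_fun ((1 - u) *\<^sub>R x + u *\<^sub>R y) \<le> (1 - u) * partition_fun x + u * partition_fun y"
    by simp
qed

lemma continuous_on_log_partition: "continuous_on \<Theta> A"
proof -
  have "continuous_on \<Theta> partition_fun"
    using convex_on_continuous[OF open_Theta partition_fun_convex] .
  then have "continuous_on \<Theta> (\<lambda>\<eta>. ln (partition_fun \<eta>))"
    by (intro continuous_intros) (auto dest: partition_fun_pos)
  then show ?thesis by (simp add: log_partition_eq[abs_def])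
qed

text \<open>Monotonicity of the mean: every mean between \<open>mean (a - h)\<close> and \<open>mean (a + h)\<close>, where
  \<open>a = param x\<^sub>0\<close>, has its natural parameter in \<open>]a - h, a + h[\<close>.\<close>
lemma continuous_on_param: "continuous_on X param"
  unfolding continuous_on_iff dist_real_def
proof (intro ballI allI impI)
  fix x0 e :: real assume x0: "x0 \<in> X" and "0 < e"
  define a where "a = param x0"
  have a: "a \<in> \<Theta>" "mean a = x0" using x0 by (auto simp: a_def param_in mean_param)
  obtain r where "0 < r" "ball a r \<subseteq> \<Theta>" using open_Theta a open_contains_ball by blast
  define h where "h = min r e / 2"
  have h: "0 < h" "h < e" "a + h \<in> \<Theta>" "a - h \<in> \<Theta>"
    using \<open>0 < r\<close> \<open>0 < e\<close> \<open>ball a r \<subseteq> \<Theta>\<close> by (auto simp: h_def dist_real_def)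
  have "mean (a - h) < x0" "x0 < mean (a + h)" using h a by (auto simp: mean_less_iff)
  then show "\<exists>d>0. \<forall>x\<in>X. \<bar>x - x0\<bar> < d \<longrightarrow> \<bar>param x - param x0\<bar> < e"
  proof (intro exI[of _ "min (mean (a + h) - x0) (x0 - mean (a - h))"] conjI ballI impI)
    fix x assume x: "x \<in> X" "\<bar>x - x0\<bar> < min (mean (a + h) - x0) (x0 - mean (a - h))"
    then have "mean (a - h) < mean (param x)" "mean (param x) < mean (a + h)"
      by (auto simp: mean_param)
    then have "a - h < param x" "param x < a + h"
      using h x by (auto simp: mean_less_iff param_in)
    then show "\<bar>param x - param x0\<bar> < e" using h by (simp add: a_def)
  qed simp
qed

lemma continuous_on_KL_left:
  assumes "y \<in> X"
  shows "continuous_on X (\<lambda>x. KL N \<Theta> x y)"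
proof -
  have "continuous_on X (\<lambda>x. (param x - param y) * x - A (param x) + A (param y))"
    using continuous_on_param param_in
    by (intro continuous_intros continuous_on_compose2[OF continuous_on_log_partition]) auto
  then show ?thesis using assms by (simp add: KL_eq cong: continuous_on_cong)
qed

lemma KL_approx_from_below:
  assumes x: "x \<in> X" and \<theta>: "\<theta> \<in> X" and "0 < d"
  shows "\<exists>y\<in>X. y < \<theta> \<and> KL N \<Theta> x y \<le> KL N \<Theta> x \<theta> + d"
proof -
  define a where "a = param \<theta>"
  have a: "a \<in> \<Theta>" "mean a = \<theta>" using \<theta> by (auto simp: a_def param_in mean_param)
  define g where "g \<eta> = (param x - \<eta>) * x - A (param x) + A \<eta>" for \<eta>
  have "continuous_on \<Theta> g" unfolding g_def by (intro continuous_intros continuous_on_log_partition)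
  then have "isCont g a" using a open_Theta continuous_on_eq_continuous_at by blast
  then obtain r where r: "0 < r" "\<forall>\<eta>. \<bar>\<eta> - a\<bar> < r \<longrightarrow> \<bar>g \<eta> - g a\<bar> < d"
    using \<open>0 < d\<close> unfolding continuous_at_eps_delta dist_real_def by blast
  obtain r' where "0 < r'" "ball a r' \<subseteq> \<Theta>" using open_Theta a open_contains_ball by blast
  define \<eta> where "\<eta> = a - min r r' / 2"
  have \<eta>: "\<eta> \<in> \<Theta>" "\<eta> < a" "\<bar>\<eta> - a\<bar> < r"
    using r \<open>0 < r'\<close> \<open>ball a r' \<subseteq> \<Theta>\<close> by (auto simp: \<eta>_def dist_real_def)
  have "mean \<eta> \<in> X" using \<eta> by (simp add: mean_set_def)
  moreover have "mean \<eta> < \<theta>" using \<eta> a mean_less_iff[of \<eta> a] by simp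
  moreover have "KL N \<Theta> x (mean \<eta>) = g \<eta>"
    using \<eta> x \<open>mean \<eta> \<in> X\<close> by (simp add: KL_eq g_def param_mean)
  moreover have "KL N \<Theta> x \<theta> = g a" using x \<theta> by (simp add: KL_eq g_def a_def)
  ultimately show ?thesis using r(2) \<eta>(3) by force
qed

end

section \<open>Game trees\<close>

lemma finite_leaves: "finite (leaves s)"
  by (induction s rule: leaves.induct) auto

lemma leaves_nonempty: "wf_tree s \<Longrightarrow> leaves s \<noteq> {}"
  by (induction s rule: leaves.induct) (auto simp: neq_Nil_conv)

lemma set_leaf_list: "set (leaf_list s) = leaves s"
  by (induction s rule: leaves.induct) auto

lemma subtrees_refl: "s \<in> subtrees s"
  by (cases s) auto

lemma subtrees_trans: "s \<in> subtrees T \<Longrightarrow> subtrees s \<subseteq> subtrees T"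
  by (induction T rule: subtrees.induct) auto

lemma child_in_subtrees: "Node k cs \<in> subtrees T \<Longrightarrow> c \<in> set cs \<Longrightarrow> c \<in> subtrees T"
  using subtrees_trans[of "Node k cs" T] subtrees_refl[of c] by auto

lemma leaves_subtree: "s \<in> subtrees T \<Longrightarrow> leaves s \<subseteq> leaves T"
  by (induction T rule: subtrees.induct) auto

lemma wf_tree_subtree: "wf_tree T \<Longrightarrow> s \<in> subtrees T \<Longrightarrow> wf_tree s"
  by (induction T rule: subtrees.induct) auto

lemma distinct_leaf_list_subtree: "distinct (leaf_list T) \<Longrightarrow> s \<in> subtrees T \<Longrightarrow> distinct (leaf_list s)"
proof (induction T rule: subtrees.induct)
  case (2 k cs)
  then show ?case by (auto simp: distinct_concat_iff)
qed auto

lemma game_tree_subtree: "game_tree T \<Longrightarrow> s \<in> subtrees T \<Longrightarrow> game_tree s"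
  using wf_tree_subtree distinct_leaf_list_subtree by (auto simp: game_tree_def)

lemma distinct_concat_map_disjoint:
  assumes "distinct (concat (map f xs))" "\<forall>x\<in>set xs. f x \<noteq> []"
    "x \<in> set xs" "y \<in> set xs" "x \<noteq> y"
  shows "set (f x) \<inter> set (f y) = {}"
  using assms
proof (induction xs)
  case (Cons a xs)
  then show ?case by (cases "x = a \<or> y = a") auto
qed auto

lemma disjoint_leaves_children:
  assumes "game_tree (Node k cs)" "c1 \<in> set cs" "c2 \<in> set cs" "c1 \<noteq> c2"
  shows "leaves c1 \<inter> leaves c2 = {}"
proof -
  have "\<forall>c\<in>set cs. leaf_list c \<noteq> []"
    using assms(1) leaves_nonempty by (auto simp: game_tree_def set_leaf_list[symmetric])
  then show ?thesis
    using assms distinct_concat_map_disjoint[of leaf_list cs c1 c2]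
    by (simp add: game_tree_def set_leaf_list)
qed

lemma val_cong: "(\<And>l. l \<in> leaves s \<Longrightarrow> a l = b l) \<Longrightarrow> val a s = val b s"
proof (induction a s rule: val.induct)
  case (2 lam cs)
  then have "map (val lam) cs = map (val b) cs" by (auto simp: map_eq_conv)
  then show ?case by simp
next
  case (3 lam cs)
  then have "map (val lam) cs = map (val b) cs" by (auto simp: map_eq_conv)
  then show ?case by simp
qed auto

lemma wins_cong: "(\<And>l. l \<in> leaves s \<Longrightarrow> a l = b l) \<Longrightarrow> wins \<theta> a s = wins \<theta> b s"
  unfolding wins_def using val_cong by metis

lemma wins_Node_reversed_P:
  assumes "(k = MAXnode) = win" "cs \<noteq> []"
  shows "wins \<theta> lam (Node k cs) \<noteq> win \<longleftrightarrow> (\<forall>c\<in>set cs. wins \<theta> lam c \<noteq> win)"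
  using assms by (cases k; cases win) (auto simp: wins_def Max_ge_iff Min_ge_iff not_le)

lemma wins_Node_reversed_Q:
  assumes "(k = MAXnode) \<noteq> win" "cs \<noteq> []"
  shows "wins \<theta> lam (Node k cs) \<noteq> win \<longleftrightarrow> (\<exists>c\<in>set cs. wins \<theta> lam c \<noteq> win)"
  using assms by (cases k; cases win) (auto simp: wins_def Max_ge_iff Min_ge_iff not_le)

section \<open>Optimality of the recursive weights\<close>

text \<open>The sum over \<open>cs\<close> at P nodes only selects the child \<open>ch s\<close>; it makes the recursion
  structural although \<open>ch\<close> is not known to return a child.\<close>
fun choice_weights ::
  "(real \<Rightarrow> real \<Rightarrow> real) \<Rightarrow> real \<Rightarrow> bool \<Rightarrow> ('l \<Rightarrow> real) \<Rightarrow> ('l gtree \<Rightarrow> 'l gtree) \<Rightarrow> 'l gtree \<Rightarrow> 'l \<Rightarrow> real"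
where
  "choice_weights dv \<theta> win \<nu> ch (Leaf l) = (\<lambda>m. if m = l then 1 else 0)"
| "choice_weights dv \<theta> win \<nu> ch (Node k cs) =
    (if (k = MAXnode) = win \<and> 0 < dval dv \<theta> win \<nu> (Node k cs) then
       (\<lambda>m. \<Sum>c\<in>set cs. if c = ch (Node k cs) \<and> m \<in> leaves c then choice_weights dv \<theta> win \<nu> ch c m else 0)
     else if (k = MAXnode) \<noteq> win \<and> (\<forall>c\<in>set cs. 0 < dval dv \<theta> win \<nu> c) then
       (\<lambda>m. \<Sum>c\<in>set cs. if m \<in> leaves c then
             (choice_weights dv \<theta> win \<nu> ch c m / dval dv \<theta> win \<nu> c) / (\<Sum>c'\<in>set cs. 1 / dval dv \<theta> win \<nu> c') else 0)
     else (\<lambda>m. if m \<in> leaves (Node k cs) then 1 / card (leaves (Node k cs)) else 0))"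

locale game_divergence =
  fixes dv :: "real \<Rightarrow> real \<Rightarrow> real" and X :: "real set" and \<theta> :: real and T :: "'l gtree"
  assumes game_tree: "game_tree T"
    and threshold_in: "\<theta> \<in> X"
    and dv_self: "dv x x = 0"
    and dv_pos: "x \<in> X \<Longrightarrow> y \<in> X \<Longrightarrow> x \<noteq> y \<Longrightarrow> 0 < dv x y"
    and dv_mono_above: "x \<in> X \<Longrightarrow> y \<in> X \<Longrightarrow> z \<in> X \<Longrightarrow> x \<le> y \<Longrightarrow> y \<le> z \<Longrightarrow> dv x y \<le> dv x z"
    and dv_mono_below: "x \<in> X \<Longrightarrow> y \<in> X \<Longrightarrow> z \<in> X \<Longrightarrow> z \<le> y \<Longrightarrow> y \<le> x \<Longrightarrow> dv x y \<le> dv x z"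
    and dv_approx_from_below: "x \<in> X \<Longrightarrow> 0 < d \<Longrightarrow> \<exists>y\<in>X. y < \<theta> \<and> dv x y \<le> dv x \<theta> + d"
    and continuous_dv: "continuous_on X (\<lambda>x. dv x \<theta>)"
begin

lemma dv_nonneg: "x \<in> X \<Longrightarrow> y \<in> X \<Longrightarrow> 0 \<le> dv x y"
  using dv_pos[of x y] dv_self[of x] by (cases "x = y") auto

lemma wf_subtree: "s \<in> subtrees T \<Longrightarrow> wf_tree s"
  using game_tree wf_tree_subtree by (auto simp: game_tree_def)

lemma children_nonempty: "Node k cs \<in> subtrees T \<Longrightarrow> cs \<noteq> []"
  using wf_subtree by fastforce

lemma disjoint_leaves_children_subtree:
  "Node k cs \<in> subtrees T \<Longrightarrow> c1 \<in> set cs \<Longrightarrow> c2 \<in> set cs \<Longrightarrow> c1 \<noteq> c2 \<Longrightarrow> leaves c1 \<inter> leaves c2 = {}"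
  using disjoint_leaves_children game_tree_subtree game_tree by blast

lemma sum_leaves_Node:
  assumes "Node k cs \<in> subtrees T"
  shows "sum g (leaves (Node k cs)) = (\<Sum>c\<in>set cs. sum g (leaves c))"
  using disjoint_leaves_children_subtree[OF assms]
  by (simp add: sum.UNION_disjoint finite_leaves disjoint_iff)

lemma dval_nonneg:
  assumes "wf_tree s" "\<forall>l\<in>leaves s. \<nu> l \<in> X"
  shows "0 \<le> dval dv \<theta> win \<nu> s"
  using assms
proof (induction s)
  case (Leaf l)
  then show ?case using dv_nonneg threshold_in by simp
next
  case (Node k cs)
  show ?case
  proof (cases "(k = MAXnode) = win")
    case True
    obtain c where c: "c \<in> set cs" using Node.prems by (cases cs) auto
    have "0 \<le> dval dv \<theta> win \<nu> c" using Node c by auto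
    also have "\<dots> \<le> Max (set (map (dval dv \<theta> win \<nu>) cs))" using c by (intro Max_ge) auto
    finally show ?thesis using True by simp
  qed (auto intro!: sum_nonneg simp: less_imp_le)
qed

lemma dval_pos:
  assumes "wf_tree s" "\<forall>l\<in>leaves s. \<nu> l \<in> X" "if win then \<theta> < val \<nu> s else val \<nu> s < \<theta>"
  shows "0 < dval dv \<theta> win \<nu> s"
  using assms
proof (induction s)
  case (Leaf l)
  then show ?case using dv_pos threshold_in by (cases win) auto
next
  case (Node k cs)
  have IH: "c \<in> set cs \<Longrightarrow> (if win then \<theta> < val \<nu> c else val \<nu> c < \<theta>) \<Longrightarrow> 0 < dval dv \<theta> win \<nu> c" for c
    using Node by auto
  have ne: "cs \<noteq> []" using Node.prems by simp
  show ?case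
  proof (cases "(k = MAXnode) = win")
    case True
    then obtain c where c: "c \<in> set cs" "if win then \<theta> < val \<nu> c else val \<nu> c < \<theta>"
      using Node.prems(3) ne by (cases k; cases win) (auto simp: Max_gr_iff Min_less_iff)
    have "0 < dval dv \<theta> win \<nu> c" using IH c by blast
    also have "\<dots> \<le> Max (set (map (dval dv \<theta> win \<nu>) cs))" using c by (intro Max_ge) auto
    finally show ?thesis using True by simp
  next
    case False
    then have "\<forall>c\<in>set cs. if win then \<theta> < val \<nu> c else val \<nu> c < \<theta>"
      using Node.prems(3) ne by (cases k; cases win) (auto simp: Min_gr_iff Max_less_iff)
    then have "\<forall>c\<in>set cs. 0 < dval dv \<theta> win \<nu> c" using IH by blast
    then show ?thesis using False ne by (auto intro!: sum_pos)
  qed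
qed

lemma dval_Node_zero:
  assumes "wf_tree (Node k cs)" "\<forall>l\<in>leaves (Node k cs). \<nu> l \<in> X"
    "\<not> ((k = MAXnode) = win \<and> 0 < dval dv \<theta> win \<nu> (Node k cs))"
    "\<not> ((k = MAXnode) \<noteq> win \<and> (\<forall>c\<in>set cs. 0 < dval dv \<theta> win \<nu> c))"
  shows "dval dv \<theta> win \<nu> (Node k cs) = 0"
proof (cases "(k = MAXnode) = win")
  case True
  then show ?thesis using assms(3) dval_nonneg[OF assms(1,2), of win] by simp
next
  case False
  then have "\<not> (\<forall>c\<in>set cs. 0 < dval dv \<theta> win \<nu> c)" using assms(4) by blast
  then show ?thesis using False by (simp only: dval.simps if_False)
qed

abbreviation D :: "('l \<Rightarrow> real) \<Rightarrow> 'l gtree \<Rightarrow> real" where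
  "D \<nu> \<equiv> dval dv \<theta> (wins \<theta> \<nu> T) \<nu>"

lemma valid_weights_Leaf:
  "valid_weights dv \<theta> \<nu> T w \<Longrightarrow> Leaf l \<in> subtrees T \<Longrightarrow> w (Leaf l) = (\<lambda>m. if m = l then 1 else 0)"
  unfolding valid_weights_def by fastforce

lemma valid_weights_P:
  "valid_weights dv \<theta> \<nu> T w \<Longrightarrow> Node k cs \<in> subtrees T \<Longrightarrow> (k = MAXnode) = wins \<theta> \<nu> T \<Longrightarrow>
   0 < D \<nu> (Node k cs) \<Longrightarrow>
   \<exists>c\<in>set cs. D \<nu> c = D \<nu> (Node k cs) \<and> w (Node k cs) = (\<lambda>m. if m \<in> leaves c then w c m else 0)"
  unfolding valid_weights_def by (drule bspec) auto

lemma valid_weights_Q: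
  "valid_weights dv \<theta> \<nu> T w \<Longrightarrow> Node k cs \<in> subtrees T \<Longrightarrow> (k = MAXnode) \<noteq> wins \<theta> \<nu> T \<Longrightarrow>
   \<forall>c\<in>set cs. 0 < D \<nu> c \<Longrightarrow>
   w (Node k cs) = (\<lambda>m. \<Sum>c\<in>set cs. if m \<in> leaves c then
                  (w c m / D \<nu> c) / (\<Sum>c'\<in>set cs. 1 / D \<nu> c') else 0)"
  unfolding valid_weights_def by (drule bspec) auto

lemma valid_weights_zero:
  "valid_weights dv \<theta> \<nu> T w \<Longrightarrow> Node k cs \<in> subtrees T \<Longrightarrow> D \<nu> (Node k cs) = 0 \<Longrightarrow>
   w (Node k cs) \<in> leaf_simplex (leaves (Node k cs))"
  unfolding valid_weights_def leaf_simplex_def by (drule bspec) auto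

lemma valid_weights_Q_leaf:
  assumes "valid_weights dv \<theta> \<nu> T w" "Node k cs \<in> subtrees T" "(k = MAXnode) \<noteq> wins \<theta> \<nu> T"
    "\<forall>c\<in>set cs. 0 < D \<nu> c" "c \<in> set cs" "m \<in> leaves c"
  shows "w (Node k cs) m = (w c m / D \<nu> c) / (\<Sum>c'\<in>set cs. 1 / D \<nu> c')"
proof -
  have "w (Node k cs) m = (\<Sum>c'\<in>set cs. if c' = c then (w c' m / D \<nu> c') / (\<Sum>c'\<in>set cs. 1 / D \<nu> c') else 0)"
    unfolding valid_weights_Q[OF assms(1-4)]
    using disjoint_leaves_children_subtree[OF assms(2) _ assms(5)] assms(6)
    by (intro sum.cong) auto
  then show ?thesis using assms(5) by simp
qed

lemma valid_weightsI:
  assumes leaf: "\<And>l. Leaf l \<in> subtrees T \<Longrightarrow> w (Leaf l) = (\<lambda>m. if m = l then 1 else 0)"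
    and P: "\<And>k cs. Node k cs \<in> subtrees T \<Longrightarrow> (k = MAXnode) = wins \<theta> \<nu> T \<Longrightarrow> 0 < D \<nu> (Node k cs) \<Longrightarrow>
      \<exists>c\<in>set cs. D \<nu> c = D \<nu> (Node k cs) \<and> w (Node k cs) = (\<lambda>m. if m \<in> leaves c then w c m else 0)"
    and Q: "\<And>k cs. Node k cs \<in> subtrees T \<Longrightarrow> (k = MAXnode) \<noteq> wins \<theta> \<nu> T \<Longrightarrow> \<forall>c\<in>set cs. 0 < D \<nu> c \<Longrightarrow>
      w (Node k cs) = (\<lambda>m. \<Sum>c\<in>set cs. if m \<in> leaves c then
        (w c m / D \<nu> c) / (\<Sum>c'\<in>set cs. 1 / D \<nu> c') else 0)"
    and zero: "\<And>k cs. Node k cs \<in> subtrees T \<Longrightarrow> D \<nu> (Node k cs) = 0 \<Longrightarrow>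
      w (Node k cs) \<in> leaf_simplex (leaves (Node k cs))"
  shows "valid_weights dv \<theta> \<nu> T w"
  unfolding valid_weights_def
proof (intro ballI, goal_cases)
  case (1 s)
  show ?case
  proof (cases s)
    case (Node k cs)
    have "0 \<le> w s m" if "D \<nu> s = 0" for m
      using leaf_simplex_nonneg[OF zero] 1 that unfolding Node by blast
    then show ?thesis
      using P[of k cs] Q[of k cs] zero[of k cs] 1 unfolding Node leaf_simplex_def
      by (simp only: gtree.case mem_Collect_eq) blast
  qed (use leaf 1 in simp)
qed

lemma valid_weights_simplex:
  assumes valid: "valid_weights dv \<theta> \<nu> T w" and \<nu>: "\<forall>l\<in>leaves T. \<nu> l \<in> X"
  shows "s \<in> subtrees T \<Longrightarrow> w s \<in> leaf_simplex (leaves s)"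
proof (induction s)
  case (Leaf l)
  then show ?case using valid_weights_Leaf[OF valid] by (auto simp: leaf_simplex_def)
next
  case (Node k cs)
  let ?s = "Node k cs"
  have IH: "c \<in> set cs \<Longrightarrow> w c \<in> leaf_simplex (leaves c)" for c
    using Node child_in_subtrees by blast
  show ?case
  proof (cases "(k = MAXnode) = wins \<theta> \<nu> T \<and> 0 < D \<nu> ?s")
    case True
    then obtain c where c: "c \<in> set cs" "w ?s = (\<lambda>m. if m \<in> leaves c then w c m else 0)"
      using valid_weights_P[OF valid Node.prems] by blast
    have "leaves c \<subseteq> leaves ?s" using c by auto
    then have "sum (w ?s) (leaves ?s) = sum (w c) (leaves c)"
      by (subst sum.mono_neutral_right[of "leaves ?s" "leaves c"]) (auto simp: c(2) finite_leaves simp del: leaves.simps)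
    then show ?thesis using IH[OF c(1)] c \<open>leaves c \<subseteq> leaves ?s\<close>
      by (auto simp: leaf_simplex_def simp del: leaves.simps)
  next
    case notP: False
    show ?thesis
    proof (cases "(k = MAXnode) \<noteq> wins \<theta> \<nu> T \<and> (\<forall>c\<in>set cs. 0 < D \<nu> c)")
      case True
      define H where "H = (\<Sum>c\<in>set cs. 1 / D \<nu> c)"
      have "0 < H" unfolding H_def using True children_nonempty[OF Node.prems] by (intro sum_pos) auto
      have ws: "w ?s = (\<lambda>m. \<Sum>c\<in>set cs. if m \<in> leaves c then (w c m / D \<nu> c) / H else 0)"
        using valid_weights_Q[OF valid Node.prems] True unfolding H_def by blast
      have "0 \<le> w ?s m" for m unfolding ws using IH True \<open>0 < H\<close>
        by (intro sum_nonneg) (auto intro!: divide_nonneg_pos leaf_simplex_nonneg[of "w _" "leaves _"])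
      moreover have "w ?s m = 0" if "m \<notin> leaves ?s" for m unfolding ws using that by auto
      moreover have "sum (w ?s) (leaves ?s) = 1"
      proof -
        have "sum (w ?s) (leaves ?s) = (\<Sum>c\<in>set cs. \<Sum>m\<in>leaves c. (w c m / D \<nu> c) / H)"
          unfolding sum_leaves_Node[OF Node.prems] H_def
          using valid_weights_Q_leaf[OF valid Node.prems] True by (intro sum.cong refl) auto
        also have "\<dots> = (\<Sum>c\<in>set cs. (1 / D \<nu> c) / H)"
          using IH by (intro sum.cong refl) (simp add: leaf_simplex_def flip: sum_divide_distrib)
        also have "\<dots> = H / H" unfolding H_def by (rule sum_divide_distrib[symmetric])
        also have "\<dots> = 1" using \<open>0 < H\<close> by simp
        finally show ?thesis .
      qed
      ultimately show ?thesis by (auto simp: leaf_simplex_def simp del: leaves.simps)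
    next
      case False
      have "D \<nu> ?s = 0"
        using notP False \<nu> leaves_subtree[OF Node.prems] by (intro dval_Node_zero wf_subtree Node.prems) auto
      then show ?thesis using valid_weights_zero[OF valid Node.prems] by simp
    qed
  qed
qed

definition cost :: "('l \<Rightarrow> real) \<Rightarrow> ('l \<Rightarrow> real) \<Rightarrow> ('l \<Rightarrow> real) \<Rightarrow> 'l gtree \<Rightarrow> real" where
  "cost \<nu> w lam s = (\<Sum>l\<in>leaves s. w l * dv (\<nu> l) (lam l))"

definition reversals :: "bool \<Rightarrow> 'l gtree \<Rightarrow> ('l \<Rightarrow> real) set" where
  "reversals win s = {lam. (\<forall>l\<in>leaves s. lam l \<in> X) \<and> wins \<theta> lam s \<noteq> win}"

lemma cost_nonneg:
  "(\<And>l. l \<in> leaves s \<Longrightarrow> 0 \<le> w l \<and> \<nu> l \<in> X \<and> lam l \<in> X) \<Longrightarrow> 0 \<le> cost \<nu> w lam s"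
  unfolding cost_def by (intro sum_nonneg mult_nonneg_nonneg dv_nonneg) auto

lemma cost_le_subtree:
  assumes "leaves c \<subseteq> leaves s" "\<And>l. l \<in> leaves s \<Longrightarrow> 0 \<le> w l \<and> \<nu> l \<in> X \<and> lam l \<in> X"
  shows "cost \<nu> w lam c \<le> cost \<nu> w lam s"
  unfolding cost_def using assms by (intro sum_mono2 finite_leaves mult_nonneg_nonneg dv_nonneg) auto

lemma dval_le_cost_Q:
  assumes valid: "valid_weights dv \<theta> \<mu> T w" and s: "Node k cs \<in> subtrees T"
    and Q: "(k = MAXnode) \<noteq> wins \<theta> \<mu> T" and pos: "\<forall>c\<in>set cs. 0 < D \<mu> c" and c: "c \<in> set cs"
    and nonneg: "\<And>l. l \<in> leaves (Node k cs) \<Longrightarrow> 0 \<le> w (Node k cs) l \<and> \<mu> l \<in> X \<and> lam l \<in> X"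
    and IH: "D \<mu> c \<le> cost \<mu> (w c) lam c"
  shows "D \<mu> (Node k cs) \<le> cost \<mu> (w (Node k cs)) lam (Node k cs)"
proof -
  define H where "H = (\<Sum>c\<in>set cs. 1 / D \<mu> c)"
  have "0 < H" unfolding H_def using pos children_nonempty[OF s] by (intro sum_pos) auto
  have "0 < D \<mu> c" using pos c by auto
  have "D \<mu> (Node k cs) = (1 / (D \<mu> c * H)) * D \<mu> c"
    using Q pos \<open>0 < D \<mu> c\<close> by (simp add: H_def inverse_eq_divide)
  also have "\<dots> \<le> (1 / (D \<mu> c * H)) * cost \<mu> (w c) lam c"
    using IH \<open>0 < D \<mu> c\<close> \<open>0 < H\<close> by (intro mult_left_mono) auto
  also have "\<dots> = cost \<mu> (w (Node k cs)) lam c"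
    using valid_weights_Q_leaf[OF valid s Q pos c] by (simp add: cost_def sum_distrib_left H_def)
  also have "\<dots> \<le> cost \<mu> (w (Node k cs)) lam (Node k cs)"
    using c nonneg by (intro cost_le_subtree) auto
  finally show ?thesis .
qed

lemma dval_le_cost:
  assumes valid: "valid_weights dv \<theta> \<mu> T w" and \<mu>: "\<forall>l\<in>leaves T. \<mu> l \<in> X"
  shows "s \<in> subtrees T \<Longrightarrow> lam \<in> reversals (wins \<theta> \<mu> T) s \<Longrightarrow> D \<mu> s \<le> cost \<mu> (w s) lam s"
proof (induction s)
  case (Leaf l)
  have "\<mu> l \<in> X" "lam l \<in> X" using Leaf \<mu> leaves_subtree[OF Leaf.prems(1)] by (auto simp: reversals_def)
  then have "D \<mu> (Leaf l) \<le> dv (\<mu> l) (lam l)"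
    using Leaf.prems(2) dv_mono_below[of "\<mu> l" \<theta> "lam l"] dv_mono_above[of "\<mu> l" \<theta> "lam l"]
      dv_nonneg threshold_in
    by (auto simp: reversals_def wins_def)
  then show ?case using valid_weights_Leaf[OF valid Leaf.prems(1)] by (simp add: cost_def)
next
  case (Node k cs)
  let ?s = "Node k cs" and ?win = "wins \<theta> \<mu> T"
  have ne: "cs \<noteq> []" using children_nonempty[OF Node.prems(1)] .
  have lam_c: "lam \<in> reversals ?win c" if "c \<in> set cs" "wins \<theta> lam c \<noteq> ?win" for c
    using that Node.prems(2) by (auto simp: reversals_def)
  have nonneg: "0 \<le> w ?s l \<and> \<mu> l \<in> X \<and> lam l \<in> X" if "l \<in> leaves ?s" for l
    using that valid_weights_simplex[OF valid \<mu> Node.prems(1)] leaf_simplex_nonneg \<mu>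
      leaves_subtree[OF Node.prems(1)] Node.prems(2) by (auto simp: reversals_def)
  show ?case
  proof (cases "(k = MAXnode) = ?win \<and> 0 < D \<mu> ?s")
    case True
    then obtain c where c: "c \<in> set cs" "D \<mu> c = D \<mu> ?s"
      "w ?s = (\<lambda>m. if m \<in> leaves c then w c m else 0)"
      using valid_weights_P[OF valid Node.prems(1)] by blast
    have "wins \<theta> lam c \<noteq> ?win"
      using wins_Node_reversed_P[OF _ ne] True Node.prems(2) c(1) by (auto simp: reversals_def)
    then have "D \<mu> c \<le> cost \<mu> (w c) lam c"
      using Node.IH[OF c(1) child_in_subtrees[OF Node.prems(1) c(1)]] lam_c c(1) by blast
    also have "\<dots> = cost \<mu> (w ?s) lam ?s"
      unfolding cost_def c(3) using c(1)
      by (intro sum.mono_neutral_cong_left finite_leaves) auto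
    finally show ?thesis using c(2) by simp
  next
    case notP: False
    show ?thesis
    proof (cases "(k = MAXnode) \<noteq> ?win \<and> (\<forall>c\<in>set cs. 0 < D \<mu> c)")
      case True
      obtain c where c: "c \<in> set cs" "wins \<theta> lam c \<noteq> ?win"
        using wins_Node_reversed_Q[OF _ ne] True Node.prems(2) by (auto simp: reversals_def)
      then show ?thesis
        using dval_le_cost_Q[OF valid Node.prems(1)] True nonneg
          Node.IH[OF c(1) child_in_subtrees[OF Node.prems(1) c(1)] lam_c[OF c]] by blast
    next
      case False
      have "D \<mu> ?s = 0"
        using notP False \<mu> leaves_subtree[OF Node.prems(1)]
        by (intro dval_Node_zero wf_subtree Node.prems(1)) auto
      then show ?thesis using cost_nonneg[of ?s, OF nonneg] by simp
    qed
  qed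
qed

lemma reversal_cost_Leaf:
  assumes "\<mu> l \<in> X" "0 \<le> w l" "0 < \<delta>"
  shows "\<exists>lam\<in>reversals win (Leaf l). cost \<mu> w lam (Leaf l) \<le> dval dv \<theta> win \<mu> (Leaf l) * w l + \<delta>"
proof (cases "win \<longleftrightarrow> \<theta> \<le> \<mu> l")
  case same: True
  show ?thesis
  proof (cases win)
    case True
    define \<delta>' where "\<delta>' = \<delta> / (w l + 1)"
    have "0 < \<delta>'" "w l * \<delta>' \<le> \<delta>" using assms by (auto simp: \<delta>'_def field_simps)
    obtain y where y: "y \<in> X" "y < \<theta>" "dv (\<mu> l) y \<le> dv (\<mu> l) \<theta> + \<delta>'"
      using dv_approx_from_below[OF assms(1) \<open>0 < \<delta>'\<close>] by blast
    have "w l * dv (\<mu> l) y \<le> w l * (dv (\<mu> l) \<theta> + \<delta>')" using y assms by (intro mult_left_mono) auto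
    then have "cost \<mu> w (\<lambda>_. y) (Leaf l) \<le> dval dv \<theta> win \<mu> (Leaf l) * w l + \<delta>"
      using True same \<open>w l * \<delta>' \<le> \<delta>\<close> by (simp add: cost_def algebra_simps)
    moreover have "(\<lambda>_. y) \<in> reversals win (Leaf l)" using True y by (simp add: reversals_def wins_def)
    ultimately show ?thesis by blast
  next
    case False
    have "cost \<mu> w (\<lambda>_. \<theta>) (Leaf l) = dval dv \<theta> win \<mu> (Leaf l) * w l"
      using False same by (simp add: cost_def)
    moreover have "(\<lambda>_. \<theta>) \<in> reversals win (Leaf l)"
      using False threshold_in by (simp add: reversals_def wins_def)
    ultimately show ?thesis using assms(3) by (intro bexI[of _ "\<lambda>_. \<theta>"]) auto
  qed
next
  case False
  then have "\<mu> \<in> reversals win (Leaf l)" using assms(1) by (auto simp: reversals_def wins_def)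
  moreover have "cost \<mu> w \<mu> (Leaf l) = 0" by (simp add: cost_def dv_self)
  moreover have "0 \<le> dval dv \<theta> win \<mu> (Leaf l) * w l"
    using assms dval_nonneg[of "Leaf l" \<mu>] by simp
  ultimately show ?thesis using assms(3) by (intro bexI[of _ \<mu>]) auto
qed

lemma the_child:
  assumes "Node k cs \<in> subtrees T" "c \<in> set cs" "l \<in> leaves c"
  shows "(THE c. c \<in> set cs \<and> l \<in> leaves c) = c"
  using assms disjoint_leaves_children_subtree[OF assms(1) _ assms(2)] by (intro the_equality) auto

lemma reversals_glue:
  assumes s: "Node k cs \<in> subtrees T" and "(k = MAXnode) = win"
    and f: "\<And>c. c \<in> set cs \<Longrightarrow> f c \<in> reversals win c"
  defines "lam \<equiv> \<lambda>l. f (THE c. c \<in> set cs \<and> l \<in> leaves c) l"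
  shows "lam \<in> reversals win (Node k cs)" "cost \<nu> w lam (Node k cs) = (\<Sum>c\<in>set cs. cost \<nu> w (f c) c)"
proof -
  have lam: "lam l = f c l" if "c \<in> set cs" "l \<in> leaves c" for c l
    using the_child[OF s that] by (simp add: lam_def)
  have "wins \<theta> lam c \<noteq> win" if "c \<in> set cs" for c
    using f[OF that] wins_cong[of c lam "f c" \<theta>] lam[OF that] by (auto simp: reversals_def)
  then show "lam \<in> reversals win (Node k cs)"
    using wins_Node_reversed_P[OF assms(2) children_nonempty[OF s]] f lam
    by (auto simp: reversals_def)
  show "cost \<nu> w lam (Node k cs) = (\<Sum>c\<in>set cs. cost \<nu> w (f c) c)"
    unfolding cost_def sum_leaves_Node[OF s] using lam by (intro sum.cong refl) auto
qed

lemma reversals_extend: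
  assumes s: "Node k cs \<in> subtrees T" and "(k = MAXnode) \<noteq> win" and c: "c \<in> set cs"
    and "lam \<in> reversals win c" and \<mu>: "\<forall>l\<in>leaves (Node k cs). \<mu> l \<in> X"
  defines "lam' \<equiv> \<lambda>l. if l \<in> leaves c then lam l else \<mu> l"
  shows "lam' \<in> reversals win (Node k cs)" "cost \<mu> w lam' (Node k cs) = cost \<mu> w lam c"
proof -
  have "wins \<theta> lam' c \<noteq> win"
    using assms(4) wins_cong[of c lam' lam \<theta>] by (auto simp: reversals_def lam'_def)
  then show "lam' \<in> reversals win (Node k cs)"
    using wins_Node_reversed_Q[OF assms(2) children_nonempty[OF s]] c assms(4) \<mu>
    by (auto simp: reversals_def lam'_def)
  show "cost \<mu> w lam' (Node k cs) = cost \<mu> w lam c"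
    unfolding cost_def using c by (intro sum.mono_neutral_cong_right finite_leaves) (auto simp: lam'_def dv_self)
qed

lemma reversal_cost_P_Node:
  assumes s: "Node k cs \<in> subtrees T" and P: "(k = MAXnode) = win"
    and w: "\<forall>l\<in>leaves T. 0 \<le> w l" and "0 < \<delta>"
    and IH: "\<And>c \<delta>. c \<in> set cs \<Longrightarrow> 0 < \<delta> \<Longrightarrow>
      \<exists>lam\<in>reversals win c. cost \<mu> w lam c \<le> dval dv \<theta> win \<mu> c * sum w (leaves c) + \<delta>"
  shows "\<exists>lam\<in>reversals win (Node k cs).
    cost \<mu> w lam (Node k cs) \<le> dval dv \<theta> win \<mu> (Node k cs) * sum w (leaves (Node k cs)) + \<delta>"
proof -
  let ?s = "Node k cs" and ?D = "dval dv \<theta> win \<mu>" and ?W = "\<lambda>c. sum w (leaves c)"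
  define \<delta>' where "\<delta>' = \<delta> / card (set cs)"
  have "0 < \<delta>'" "card (set cs) * \<delta>' = \<delta>"
    using \<open>0 < \<delta>\<close> children_nonempty[OF s] by (auto simp: \<delta>'_def card_gt_0_iff)
  then have "\<forall>c\<in>set cs. \<exists>lam. lam \<in> reversals win c \<and> cost \<mu> w lam c \<le> ?D c * ?W c + \<delta>'"
    using IH by blast
  then obtain f where f_rev: "\<And>c. c \<in> set cs \<Longrightarrow> f c \<in> reversals win c"
    and f_cost: "\<And>c. c \<in> set cs \<Longrightarrow> cost \<mu> w (f c) c \<le> ?D c * ?W c + \<delta>'"
    by metis
  note glue = reversals_glue[OF s P f_rev]
  have "cost \<mu> w (\<lambda>l. f (THE c. c \<in> set cs \<and> l \<in> leaves c) l) ?s = (\<Sum>c\<in>set cs. cost \<mu> w (f c) c)"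
    by (rule glue(2))
  also have "\<dots> \<le> (\<Sum>c\<in>set cs. ?D ?s * ?W c + \<delta>')"
  proof (intro sum_mono)
    fix c assume c: "c \<in> set cs"
    have "?D c \<le> ?D ?s" using P c by simp
    moreover have "0 \<le> ?W c" using w leaves_subtree[OF child_in_subtrees[OF s c]] by (intro sum_nonneg) auto
    ultimately have "?D c * ?W c \<le> ?D ?s * ?W c" by (rule mult_right_mono)
    then show "cost \<mu> w (f c) c \<le> ?D ?s * ?W c + \<delta>'" using f_cost[OF c] by simp
  qed
  also have "\<dots> = ?D ?s * (\<Sum>c\<in>set cs. ?W c) + card (set cs) * \<delta>'"
    by (simp only: sum.distrib sum_distrib_left sum_constant)
  also have "\<dots> = ?D ?s * sum w (leaves ?s) + \<delta>"
    by (simp only: sum_leaves_Node[OF s] \<open>card (set cs) * \<delta>' = \<delta>\<close>)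
  finally show ?thesis using glue(1) by blast
qed

lemma reversal_cost_Q_Node:
  assumes s: "Node k cs \<in> subtrees T" and Q: "(k = MAXnode) \<noteq> win"
    and \<mu>: "\<forall>l\<in>leaves T. \<mu> l \<in> X" and "0 < \<delta>"
    and IH: "\<And>c. c \<in> set cs \<Longrightarrow>
      \<exists>lam\<in>reversals win c. cost \<mu> w lam c \<le> dval dv \<theta> win \<mu> c * sum w (leaves c) + \<delta>"
  shows "\<exists>lam\<in>reversals win (Node k cs).
    cost \<mu> w lam (Node k cs) \<le> dval dv \<theta> win \<mu> (Node k cs) * sum w (leaves (Node k cs)) + \<delta>"
proof -
  let ?s = "Node k cs" and ?D = "dval dv \<theta> win \<mu>" and ?W = "\<lambda>c. sum w (leaves c)"
  have \<mu>s: "\<forall>l\<in>leaves ?s. \<mu> l \<in> X" using \<mu> leaves_subtree[OF s] by blast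
  have child: "\<exists>lam\<in>reversals win ?s. cost \<mu> w lam ?s \<le> ?D ?s * sum w (leaves ?s) + \<delta>"
    if c: "c \<in> set cs" and le: "?D c * ?W c \<le> ?D ?s * sum w (leaves ?s)" for c
  proof -
    obtain lam where lam: "lam \<in> reversals win c" "cost \<mu> w lam c \<le> ?D c * ?W c + \<delta>"
      using IH[OF c] by blast
    note extend = reversals_extend[OF s Q c lam(1) \<mu>s]
    have "cost \<mu> w lam c \<le> ?D ?s * sum w (leaves ?s) + \<delta>" using lam(2) le by linarith
    then show ?thesis using extend(1) unfolding extend(2)[symmetric] by blast
  qed
  show ?thesis
  proof (cases "\<forall>c\<in>set cs. 0 < ?D c")
    case True
    then obtain c where c: "c \<in> set cs" "?D c * ?W c \<le> (\<Sum>c\<in>set cs. ?W c) / (\<Sum>c\<in>set cs. 1 / ?D c)"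
      using exists_le_harmonic_share[of "set cs" ?D ?W] children_nonempty[OF s] by auto
    then have "?D c * ?W c \<le> ?D ?s * sum w (leaves ?s)"
      unfolding sum_leaves_Node[OF s] using Q True by (simp add: inverse_eq_divide)
    then show ?thesis using child[OF c(1)] by blast
  next
    case False
    then obtain c where c: "c \<in> set cs" "\<not> 0 < ?D c" by blast
    then have "?D c = 0"
      using \<mu>s dval_nonneg[OF wf_subtree[OF child_in_subtrees[OF s c(1)]], of \<mu> win] by auto
    moreover have "?D ?s = 0" using Q False by (simp only: dval.simps if_False)
    ultimately have "?D c * ?W c \<le> ?D ?s * sum w (leaves ?s)" by (simp only: mult_zero_left order_refl)
    then show ?thesis by (rule child[OF c(1)])
  qed
qed

lemma exists_reversal_cost_le:
  assumes \<mu>: "\<forall>l\<in>leaves T. \<mu> l \<in> X" and w: "\<forall>l\<in>leaves T. 0 \<le> w l"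
  shows "s \<in> subtrees T \<Longrightarrow> 0 < \<delta> \<Longrightarrow>
    \<exists>lam\<in>reversals win s. cost \<mu> w lam s \<le> dval dv \<theta> win \<mu> s * sum w (leaves s) + \<delta>"
proof (induction s arbitrary: \<delta>)
  case (Leaf l)
  then show ?case using reversal_cost_Leaf \<mu> w leaves_subtree[OF Leaf.prems(1)] by simp
next
  case (Node k cs)
  then have IH: "\<And>c \<delta>. c \<in> set cs \<Longrightarrow> 0 < \<delta> \<Longrightarrow>
      \<exists>lam\<in>reversals win c. cost \<mu> w lam c \<le> dval dv \<theta> win \<mu> c * sum w (leaves c) + \<delta>"
    using child_in_subtrees by blast
  show ?case
  proof (cases "(k = MAXnode) = win")
    case True
    then show ?thesis by (rule reversal_cost_P_Node[OF Node.prems(1) _ w Node.prems(2) IH])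
  next
    case False
    then show ?thesis by (rule reversal_cost_Q_Node[OF Node.prems(1) _ \<mu> Node.prems(2) IH[OF _ Node.prems(2)]])
  qed
qed

lemma objective_eq:
  "objective dv X \<theta> T \<mu> w = (INF lam\<in>reversals (wins \<theta> \<mu> T) T. cost \<mu> w lam T)"
  by (simp add: objective_def Alt_def reversals_def cost_def)

lemma objective_le_dval:
  assumes \<mu>: "\<forall>l\<in>leaves T. \<mu> l \<in> X" and w: "w \<in> leaf_simplex (leaves T)"
  shows "objective dv X \<theta> T \<mu> w \<le> D \<mu> T"
proof (rule field_le_epsilon)
  fix \<delta> :: real assume "0 < \<delta>"
  have "\<forall>l\<in>leaves T. 0 \<le> w l" "sum w (leaves T) = 1" using w by (auto simp: leaf_simplex_def)
  then obtain lam where lam: "lam \<in> reversals (wins \<theta> \<mu> T) T" "cost \<mu> w lam T \<le> D \<mu> T + \<delta>"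
    using exists_reversal_cost_le[OF \<mu> _ subtrees_refl \<open>0 < \<delta>\<close>] by fastforce
  have "objective dv X \<theta> T \<mu> w \<le> cost \<mu> w lam T"
    unfolding objective_eq using w \<mu>
    by (intro cINF_lower[OF _ lam(1)] bdd_belowI[where m=0])
       (auto intro!: cost_nonneg leaf_simplex_nonneg[of w "leaves T"] simp: reversals_def)
  then show "objective dv X \<theta> T \<mu> w \<le> D \<mu> T + \<delta>" using lam(2) by simp
qed

lemma dval_le_objective:
  assumes \<mu>: "\<forall>l\<in>leaves T. \<mu> l \<in> X" and valid: "valid_weights dv \<theta> \<mu> T w"
  shows "D \<mu> T \<le> objective dv X \<theta> T \<mu> (w T)"
proof -
  have "reversals (wins \<theta> \<mu> T) T \<noteq> {}"
    using exists_reversal_cost_le[OF \<mu>, of "\<lambda>_. 0", OF _ subtrees_refl, of 1] by auto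
  then show ?thesis
    unfolding objective_eq using dval_le_cost[OF valid \<mu> subtrees_refl] by (rule cINF_greatest)
qed

lemma valid_weights_maximize:
  assumes \<mu>: "\<forall>l\<in>leaves T. \<mu> l \<in> X" and valid: "valid_weights dv \<theta> \<mu> T w"
  shows "w T \<in> leaf_simplex (leaves T) \<and>
    (\<forall>w'\<in>leaf_simplex (leaves T). objective dv X \<theta> T \<mu> w' \<le> objective dv X \<theta> T \<mu> (w T))"
  using valid_weights_simplex[OF valid \<mu> subtrees_refl] objective_le_dval[OF \<mu>]
    dval_le_objective[OF \<mu> valid] by fastforce

definition argmax_choice :: "bool \<Rightarrow> ('l \<Rightarrow> real) \<Rightarrow> ('l gtree \<Rightarrow> 'l gtree) \<Rightarrow> bool" where
  "argmax_choice win \<nu> ch \<longleftrightarrow> (\<forall>k cs. Node k cs \<in> subtrees T \<longrightarrow> (k = MAXnode) = win \<longrightarrow>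
      ch (Node k cs) \<in> set cs \<and> dval dv \<theta> win \<nu> (ch (Node k cs)) = dval dv \<theta> win \<nu> (Node k cs))"

lemma exists_argmax_child:
  assumes "Node k cs \<in> subtrees T" "(k = MAXnode) = win"
  shows "\<exists>c\<in>set cs. dval dv \<theta> win \<nu> c = dval dv \<theta> win \<nu> (Node k cs)"
proof -
  have "Max (dval dv \<theta> win \<nu> ` set cs) \<in> dval dv \<theta> win \<nu> ` set cs"
    using children_nonempty[OF assms(1)] by (intro Max_in) auto
  then show ?thesis using assms(2) by auto
qed

lemma exists_argmax_choice: "\<exists>ch. argmax_choice win \<nu> ch"
proof -
  have "\<forall>s. \<exists>c. \<forall>k cs. s = Node k cs \<longrightarrow> Node k cs \<in> subtrees T \<longrightarrow> (k = MAXnode) = win \<longrightarrow>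
      c \<in> set cs \<and> dval dv \<theta> win \<nu> c = dval dv \<theta> win \<nu> (Node k cs)"
  proof
    fix s
    show "\<exists>c. \<forall>k cs. s = Node k cs \<longrightarrow> Node k cs \<in> subtrees T \<longrightarrow> (k = MAXnode) = win \<longrightarrow>
      c \<in> set cs \<and> dval dv \<theta> win \<nu> c = dval dv \<theta> win \<nu> (Node k cs)"
    proof (cases "\<exists>k cs. s = Node k cs \<and> Node k cs \<in> subtrees T \<and> (k = MAXnode) = win")
      case True
      then obtain k cs where s: "s = Node k cs" "Node k cs \<in> subtrees T" "(k = MAXnode) = win" by blast
      then obtain c where "c \<in> set cs" "dval dv \<theta> win \<nu> c = dval dv \<theta> win \<nu> (Node k cs)"
        using exists_argmax_child by blast
      then show ?thesis using s(1) by blast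
    qed blast
  qed
  then show ?thesis unfolding argmax_choice_def by (metis choice)
qed

lemma argmax_choice_update:
  assumes "argmax_choice win \<nu> ch" "c \<in> set cs" "dval dv \<theta> win \<nu> c = dval dv \<theta> win \<nu> (Node k cs)"
  shows "argmax_choice win \<nu> (ch(Node k cs := c))"
  using assms unfolding argmax_choice_def by (auto simp del: dval.simps)

lemma choice_weights_P:
  assumes "argmax_choice win \<nu> ch" "Node k cs \<in> subtrees T" "(k = MAXnode) = win"
    "0 < dval dv \<theta> win \<nu> (Node k cs)"
  shows "choice_weights dv \<theta> win \<nu> ch (Node k cs) =
    (\<lambda>m. if m \<in> leaves (ch (Node k cs)) then choice_weights dv \<theta> win \<nu> ch (ch (Node k cs)) m else 0)"
proof
  fix m
  let ?c = "ch (Node k cs)" and ?W = "choice_weights dv \<theta> win \<nu> ch"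
  have c: "?c \<in> set cs" using assms unfolding argmax_choice_def by blast
  have "?W (Node k cs) m = (\<Sum>c\<in>set cs. if c = ?c \<and> m \<in> leaves c then ?W c m else 0)"
    by (simp only: choice_weights.simps assms(3) eqTrueI[OF assms(4)] simp_thms if_True)
  also have "\<dots> = (\<Sum>c\<in>set cs. if c = ?c then (if m \<in> leaves c then ?W c m else 0) else 0)"
    by (intro sum.cong) auto
  also have "\<dots> = (if m \<in> leaves ?c then ?W ?c m else 0)"
    using c by (simp only: sum.delta[OF finite_set] if_True)
  finally show "?W (Node k cs) m = (if m \<in> leaves ?c then ?W ?c m else 0)" .
qed

lemma choice_weights_zero:
  assumes "Node k cs \<in> subtrees T" "\<forall>l\<in>leaves T. \<nu> l \<in> X" "dval dv \<theta> win \<nu> (Node k cs) = 0"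
  shows "choice_weights dv \<theta> win \<nu> ch (Node k cs) \<in> leaf_simplex (leaves (Node k cs))"
proof -
  have ne: "cs \<noteq> []" using children_nonempty[OF assms(1)] .
  have notQ: "\<not> ((k = MAXnode) \<noteq> win \<and> (\<forall>c\<in>set cs. 0 < dval dv \<theta> win \<nu> c))"
  proof
    assume Q: "(k = MAXnode) \<noteq> win \<and> (\<forall>c\<in>set cs. 0 < dval dv \<theta> win \<nu> c)"
    then have "0 < dval dv \<theta> win \<nu> (Node k cs)" using ne by (auto intro!: sum_pos)
    then show False using assms(3) by simp
  qed
  have "choice_weights dv \<theta> win \<nu> ch (Node k cs) =
      (\<lambda>m. if m \<in> leaves (Node k cs) then 1 / card (leaves (Node k cs)) else 0)"
    using assms(3) notQ by (simp only: choice_weights.simps less_irrefl simp_thms if_False)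
  moreover have "0 < card (leaves (Node k cs))"
    using leaves_nonempty[OF wf_subtree[OF assms(1)]] finite_leaves card_gt_0_iff by blast
  ultimately show ?thesis by (simp add: leaf_simplex_def)
qed

lemma choice_weights_valid:
  assumes \<nu>: "\<forall>l\<in>leaves T. \<nu> l \<in> X" and ch: "argmax_choice (wins \<theta> \<nu> T) \<nu> ch"
  shows "valid_weights dv \<theta> \<nu> T (choice_weights dv \<theta> (wins \<theta> \<nu> T) \<nu> ch)"
proof (rule valid_weightsI)
  fix k cs assume s: "Node k cs \<in> subtrees T"
  let ?W = "choice_weights dv \<theta> (wins \<theta> \<nu> T) \<nu> ch"
  show "\<exists>c\<in>set cs. D \<nu> c = D \<nu> (Node k cs) \<and> ?W (Node k cs) = (\<lambda>m. if m \<in> leaves c then ?W c m else 0)"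
    if "(k = MAXnode) = wins \<theta> \<nu> T" "0 < D \<nu> (Node k cs)"
    using choice_weights_P[OF ch s that] ch s that(1) unfolding argmax_choice_def by blast
  show "?W (Node k cs) = (\<lambda>m. \<Sum>c\<in>set cs. if m \<in> leaves c then (?W c m / D \<nu> c) / (\<Sum>c'\<in>set cs. 1 / D \<nu> c') else 0)"
    if "(k = MAXnode) \<noteq> wins \<theta> \<nu> T" "\<forall>c\<in>set cs. 0 < D \<nu> c"
    using that by (simp only: choice_weights.simps eqTrueI[OF that(2)] simp_thms if_True if_False)
  show "?W (Node k cs) \<in> leaf_simplex (leaves (Node k cs))" if "D \<nu> (Node k cs) = 0"
    using choice_weights_zero[OF s \<nu> that] .
qed simp

lemma dval_Q_le_child:
  assumes "(k = MAXnode) \<noteq> win" "c \<in> set cs" "wf_tree c" "\<forall>l\<in>leaves c. \<nu> l \<in> X"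
  shows "dval dv \<theta> win \<nu> (Node k cs) \<le> dval dv \<theta> win \<nu> c"
proof (cases "\<forall>c\<in>set cs. 0 < dval dv \<theta> win \<nu> c")
  case True
  then have "1 / dval dv \<theta> win \<nu> c \<le> (\<Sum>c\<in>set cs. 1 / dval dv \<theta> win \<nu> c)"
    using assms(2) by (intro member_le_sum) (auto simp: less_imp_le)
  then have "inverse (\<Sum>c\<in>set cs. 1 / dval dv \<theta> win \<nu> c) \<le> inverse (1 / dval dv \<theta> win \<nu> c)"
    using True assms(2) by (intro le_imp_inverse_le) auto
  then show ?thesis using True assms(1) by simp
next
  case False
  then have "dval dv \<theta> win \<nu> (Node k cs) = 0" using assms(1) by (simp only: dval.simps if_False)
  then show ?thesis using dval_nonneg[OF assms(3,4)] by simp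
qed

definition unique_weights_at :: "('l \<Rightarrow> real) \<Rightarrow> 'l gtree \<Rightarrow> bool" where
  "unique_weights_at \<nu> s \<longleftrightarrow>
    (\<forall>w w'. valid_weights dv \<theta> \<nu> T w \<longrightarrow> valid_weights dv \<theta> \<nu> T w' \<longrightarrow> w s = w' s)"

lemma unique_weights_at_root:
  assumes \<mu>: "\<forall>l\<in>leaves T. \<mu> l \<in> X"
    and unique: "\<exists>!w. w \<in> leaf_simplex (leaves T) \<and>
      (\<forall>w'\<in>leaf_simplex (leaves T). objective dv X \<theta> T \<mu> w' \<le> objective dv X \<theta> T \<mu> w)"
  shows "unique_weights_at \<mu> T"
  unfolding unique_weights_at_def using valid_weights_maximize[OF \<mu>] unique by blast

lemma unique_weights_at_argmax_unique:
  assumes unique: "unique_weights_at \<nu> (Node k cs)" and s: "Node k cs \<in> subtrees T"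
    and P: "(k = MAXnode) = wins \<theta> \<nu> T" and pos: "0 < D \<nu> (Node k cs)" and \<nu>: "\<forall>l\<in>leaves T. \<nu> l \<in> X"
    and c: "c1 \<in> set cs" "c2 \<in> set cs" "D \<nu> c1 = D \<nu> (Node k cs)" "D \<nu> c2 = D \<nu> (Node k cs)"
  shows "c1 = c2"
proof (rule ccontr)
  assume "c1 \<noteq> c2"
  obtain ch where ch: "argmax_choice (wins \<theta> \<nu> T) \<nu> ch" using exists_argmax_choice by blast
  define ch1 ch2 where "ch1 = ch(Node k cs := c1)" and "ch2 = ch(Node k cs := c2)"
  have ch1: "argmax_choice (wins \<theta> \<nu> T) \<nu> ch1" and ch2: "argmax_choice (wins \<theta> \<nu> T) \<nu> ch2"
    unfolding ch1_def ch2_def using argmax_choice_update[OF ch] c by auto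
  let ?W1 = "choice_weights dv \<theta> (wins \<theta> \<nu> T) \<nu> ch1"
    and ?W2 = "choice_weights dv \<theta> (wins \<theta> \<nu> T) \<nu> ch2"
  have "?W1 c1 \<in> leaf_simplex (leaves c1)"
    using valid_weights_simplex[OF choice_weights_valid[OF \<nu> ch1] \<nu> child_in_subtrees[OF s c(1)]] .
  then have sum1: "sum (?W1 c1) (leaves c1) = 1" by (simp add: leaf_simplex_def)
  have "\<exists>l\<in>leaves c1. ?W1 c1 l \<noteq> 0"
  proof (rule ccontr)
    assume "\<not> (\<exists>l\<in>leaves c1. ?W1 c1 l \<noteq> 0)"
    then have "sum (?W1 c1) (leaves c1) = 0" by (intro sum.neutral) blast
    with sum1 show False by simp
  qed
  then obtain l where l: "l \<in> leaves c1" "?W1 c1 l \<noteq> 0" by blast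
  have "?W1 (Node k cs) l = ?W1 c1 l"
    using choice_weights_P[OF ch1 s P pos] l(1) by (simp add: ch1_def)
  moreover have "?W2 (Node k cs) l = 0"
    using choice_weights_P[OF ch2 s P pos] l(1) disjoint_leaves_children_subtree[OF s c(1,2) \<open>c1 \<noteq> c2\<close>]
    by (auto simp: ch2_def)
  moreover have "?W1 (Node k cs) = ?W2 (Node k cs)"
    using unique choice_weights_valid[OF \<nu> ch1] choice_weights_valid[OF \<nu> ch2]
    unfolding unique_weights_at_def by blast
  ultimately show False using l(2) by simp
qed

lemma unique_weights_at_P_child:
  assumes unique: "unique_weights_at \<nu> (Node k cs)" and s: "Node k cs \<in> subtrees T"
    and P: "(k = MAXnode) = wins \<theta> \<nu> T" and pos: "0 < D \<nu> (Node k cs)" and \<nu>: "\<forall>l\<in>leaves T. \<nu> l \<in> X"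
    and c: "c \<in> set cs" "D \<nu> c = D \<nu> (Node k cs)"
  shows "unique_weights_at \<nu> c"
  unfolding unique_weights_at_def
proof (intro allI impI)
  fix w w' assume valid: "valid_weights dv \<theta> \<nu> T w" "valid_weights dv \<theta> \<nu> T w'"
  have restrict: "u (Node k cs) = (\<lambda>m. if m \<in> leaves c then u c m else 0)"
    if u: "valid_weights dv \<theta> \<nu> T u" for u
  proof -
    obtain c' where "c' \<in> set cs" "D \<nu> c' = D \<nu> (Node k cs)"
      "u (Node k cs) = (\<lambda>m. if m \<in> leaves c' then u c' m else 0)"
      using valid_weights_P[OF u s P pos] by blast
    moreover have "c' = c"
      using unique_weights_at_argmax_unique[OF unique s P pos \<nu>] c calculation by blast
    ultimately show ?thesis by blast
  qed
  have "w (Node k cs) = w' (Node k cs)" using unique valid unfolding unique_weights_at_def by blast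
  then have "w c l = w' c l" if "l \<in> leaves c" for l
    using restrict[OF valid(1)] restrict[OF valid(2)] that by (metis (full_types))
  then show "w c = w' c"
    using valid_weights_simplex[OF _ \<nu> child_in_subtrees[OF s c(1)]] valid by (intro leaf_simplex_eqI) auto
qed

lemma unique_weights_at_Q_child:
  assumes unique: "unique_weights_at \<nu> (Node k cs)" and s: "Node k cs \<in> subtrees T"
    and Q: "(k = MAXnode) \<noteq> wins \<theta> \<nu> T" and pos: "\<forall>c\<in>set cs. 0 < D \<nu> c" and \<nu>: "\<forall>l\<in>leaves T. \<nu> l \<in> X"
    and c: "c \<in> set cs"
  shows "unique_weights_at \<nu> c"
  unfolding unique_weights_at_def
proof (intro allI impI)
  fix w w' assume valid: "valid_weights dv \<theta> \<nu> T w" "valid_weights dv \<theta> \<nu> T w'"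
  define H where "H = (\<Sum>c\<in>set cs. 1 / D \<nu> c)"
  have "0 < H" unfolding H_def using pos children_nonempty[OF s] by (intro sum_pos) auto
  have "w (Node k cs) = w' (Node k cs)" using unique valid unfolding unique_weights_at_def by blast
  then have "w c l / D \<nu> c / H = w' c l / D \<nu> c / H" if "l \<in> leaves c" for l
    using valid_weights_Q_leaf[OF valid(1) s Q pos c that] valid_weights_Q_leaf[OF valid(2) s Q pos c that]
    unfolding H_def by metis
  moreover have "D \<nu> c \<noteq> 0" "H \<noteq> 0" using pos c \<open>0 < H\<close> by auto
  ultimately have "w c l = w' c l" if "l \<in> leaves c" for l
    using that by (simp only: divide_cancel_right simp_thms)
  then show "w c = w' c"
    using valid_weights_simplex[OF _ \<nu> child_in_subtrees[OF s c]] valid by (intro leaf_simplex_eqI) auto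
qed

end

section \<open>Continuity of the weights\<close>

locale game_perturbation = game_divergence dv X \<theta> T
  for dv :: "real \<Rightarrow> real \<Rightarrow> real" and X \<theta> and T :: "'l gtree" +
  fixes \<mu> :: "'l \<Rightarrow> real" and \<mu>s :: "'i \<Rightarrow> 'l \<Rightarrow> real" and F :: "'i filter"
  assumes \<mu>_in: "\<forall>l\<in>leaves T. \<mu> l \<in> X"
    and \<mu>s_in: "\<forall>\<^sub>F i in F. \<forall>l\<in>leaves T. \<mu>s i l \<in> X"
    and \<mu>s_tendsto: "\<And>l. l \<in> leaves T \<Longrightarrow> ((\<lambda>i. \<mu>s i l) \<longlongrightarrow> \<mu> l) F"
begin

lemma eventually_subtree_in:
  assumes "s \<in> subtrees T"
  shows "\<forall>\<^sub>F i in F. \<forall>l\<in>leaves s. \<mu>s i l \<in> X"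
  using \<mu>s_in by (rule eventually_mono) (use leaves_subtree[OF assms] in blast)

lemma tendsto_val: "s \<in> subtrees T \<Longrightarrow> ((\<lambda>i. val (\<mu>s i) s) \<longlongrightarrow> val \<mu> s) F"
proof (induction s)
  case (Leaf l)
  then show ?case using \<mu>s_tendsto leaves_subtree[OF Leaf.prems] by simp
next
  case (Node k cs)
  have IH: "\<And>c. c \<in> set cs \<Longrightarrow> ((\<lambda>i. val (\<mu>s i) c) \<longlongrightarrow> val \<mu> c) F"
    using Node child_in_subtrees by blast
  show ?case
    using tendsto_Max_image[OF finite_set _ IH] tendsto_Min_image[OF finite_set _ IH]
      children_nonempty[OF Node.prems]
    by (cases k) simp_all
qed

lemma eventually_wins_eq:
  assumes "val \<mu> T \<noteq> \<theta>"
  shows "\<forall>\<^sub>F i in F. wins \<theta> (\<mu>s i) T = wins \<theta> \<mu> T"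
proof (cases "val \<mu> T < \<theta>")
  case True
  have "\<forall>\<^sub>F i in F. val (\<mu>s i) T < \<theta>" using order_tendstoD(2)[OF tendsto_val[OF subtrees_refl] True] .
  then show ?thesis by (rule eventually_mono) (use True in \<open>auto simp: wins_def\<close>)
next
  case False
  then have "\<theta> < val \<mu> T" using assms by simp
  then have "\<forall>\<^sub>F i in F. \<theta> < val (\<mu>s i) T" using order_tendstoD(1)[OF tendsto_val[OF subtrees_refl]] by blast
  then show ?thesis by (rule eventually_mono) (use \<open>\<theta> < val \<mu> T\<close> in \<open>auto simp: wins_def\<close>)
qed

lemma tendsto_dval_Leaf:
  assumes "l \<in> leaves T"
  shows "((\<lambda>i. dval dv \<theta> win (\<mu>s i) (Leaf l)) \<longlongrightarrow> dval dv \<theta> win \<mu> (Leaf l)) F"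
proof -
  have in_X: "\<forall>\<^sub>F i in F. \<mu>s i l \<in> X" using \<mu>s_in assms by (auto elim: eventually_mono)
  have dv_lim: "((\<lambda>i. dv (\<mu>s i l) \<theta>) \<longlongrightarrow> dv (\<mu> l) \<theta>) F"
    using continuous_on_tendsto_compose[OF continuous_dv \<mu>s_tendsto[OF assms]] \<mu>_in assms in_X by blast
  show ?thesis
  proof (cases "\<mu> l = \<theta>")
    case True
    have lim0: "((\<lambda>i. dval dv \<theta> win (\<mu>s i) (Leaf l)) \<longlongrightarrow> 0) F"
    proof (rule tendsto_sandwich[where f = "\<lambda>_. 0" and h = "\<lambda>i. dv (\<mu>s i l) \<theta>"])
      show "\<forall>\<^sub>F i in F. 0 \<le> dval dv \<theta> win (\<mu>s i) (Leaf l)"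
        and "\<forall>\<^sub>F i in F. dval dv \<theta> win (\<mu>s i) (Leaf l) \<le> dv (\<mu>s i l) \<theta>"
        using in_X by (auto elim!: eventually_mono intro: dv_nonneg threshold_in)
      show "((\<lambda>i. dv (\<mu>s i l) \<theta>) \<longlongrightarrow> 0) F" using dv_lim True dv_self by simp
    qed simp
    moreover have "dval dv \<theta> win \<mu> (Leaf l) = 0" using True dv_self by simp
    ultimately show ?thesis by (simp only:)
  next
    case False
    have "\<forall>\<^sub>F i in F. (\<theta> \<le> \<mu>s i l \<longleftrightarrow> \<theta> \<le> \<mu> l) \<and> (\<mu>s i l < \<theta> \<longleftrightarrow> \<mu> l < \<theta>)"
    proof (cases "\<mu> l < \<theta>")
      case True
      then show ?thesis using order_tendstoD(2)[OF \<mu>s_tendsto[OF assms] True] by (auto elim: eventually_mono)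
    next
      case False
      then have "\<theta> < \<mu> l" using \<open>\<mu> l \<noteq> \<theta>\<close> by simp
      then show ?thesis using order_tendstoD(1)[OF \<mu>s_tendsto[OF assms] \<open>\<theta> < \<mu> l\<close>]
        by (auto elim: eventually_mono)
    qed
    then have ev: "\<forall>\<^sub>F i in F. dval dv \<theta> win (\<mu>s i) (Leaf l) =
        (if (win \<and> \<theta> \<le> \<mu> l) \<or> (\<not> win \<and> \<mu> l < \<theta>) then dv (\<mu>s i l) \<theta> else 0)"
      by (auto elim: eventually_mono)
    have lim: "((\<lambda>i. if (win \<and> \<theta> \<le> \<mu> l) \<or> (\<not> win \<and> \<mu> l < \<theta>) then dv (\<mu>s i l) \<theta> else 0)
        \<longlongrightarrow> dval dv \<theta> win \<mu> (Leaf l)) F"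
      using dv_lim by (cases "(win \<and> \<theta> \<le> \<mu> l) \<or> (\<not> win \<and> \<mu> l < \<theta>)") (simp_all only: if_True if_False dval.simps tendsto_const)
    show ?thesis using lim by (subst tendsto_cong[OF ev])
  qed
qed

lemma tendsto_dval: "s \<in> subtrees T \<Longrightarrow> ((\<lambda>i. dval dv \<theta> win (\<mu>s i) s) \<longlongrightarrow> dval dv \<theta> win \<mu> s) F"
proof (induction s)
  case (Leaf l)
  then show ?case using tendsto_dval_Leaf leaves_subtree[OF Leaf.prems] by simp
next
  case (Node k cs)
  let ?s = "Node k cs" and ?D = "dval dv \<theta> win \<mu>" and ?Ds = "\<lambda>i. dval dv \<theta> win (\<mu>s i)"
  have ne: "cs \<noteq> []" using children_nonempty[OF Node.prems] .
  have sub: "c \<in> set cs \<Longrightarrow> c \<in> subtrees T" for c using child_in_subtrees Node.prems by blast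
  have IH: "\<And>c. c \<in> set cs \<Longrightarrow> ((\<lambda>i. ?Ds i c) \<longlongrightarrow> ?D c) F"
    using Node sub by blast
  show ?case
  proof (cases "(k = MAXnode) = win")
    case True
    then show ?thesis using tendsto_Max_image[OF finite_set _ IH] ne by simp
  next
    case Q: False
    show ?thesis
    proof (cases "\<forall>c\<in>set cs. 0 < ?D c")
      case True
      have "\<forall>\<^sub>F i in F. \<forall>c\<in>set cs. 0 < ?Ds i c"
        using order_tendstoD(1)[OF IH] True by (intro eventually_ball_finite) auto
      then have "\<forall>\<^sub>F i in F. ?Ds i ?s = inverse (\<Sum>c\<in>set cs. 1 / ?Ds i c)"
        by (rule eventually_mono) (use Q in simp)
      moreover have "0 < (\<Sum>c\<in>set cs. 1 / ?D c)" using True ne by (intro sum_pos) auto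
      then have "((\<lambda>i. inverse (\<Sum>c\<in>set cs. 1 / ?Ds i c)) \<longlongrightarrow> ?D ?s) F"
        using IH True Q by (auto intro!: tendsto_inverse tendsto_sum tendsto_divide)
      ultimately show ?thesis by (subst tendsto_cong) auto
    next
      case False
      then obtain c0 where c0: "c0 \<in> set cs" "?D c0 = 0"
        using dval_nonneg[OF wf_subtree[OF sub]] \<mu>_in leaves_subtree[OF sub]
        by (metis less_eq_real_def subsetD)
      have "?D ?s = 0" using Q False by (simp only: dval.simps if_False)
      moreover have "((\<lambda>i. ?Ds i ?s) \<longlongrightarrow> 0) F"
      proof (rule tendsto_sandwich[where f = "\<lambda>_. 0" and h = "\<lambda>i. ?Ds i c0"])
        note in_X = eventually_subtree_in[OF Node.prems]
        show "\<forall>\<^sub>F i in F. 0 \<le> ?Ds i ?s"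
          using in_X by (rule eventually_mono) (rule dval_nonneg[OF wf_subtree[OF Node.prems]])
        show "\<forall>\<^sub>F i in F. ?Ds i ?s \<le> ?Ds i c0"
          using in_X by (rule eventually_mono)
            (use c0(1) in \<open>auto intro!: dval_Q_le_child[OF Q] wf_subtree[OF sub] simp del: dval.simps\<close>)
        show "((\<lambda>i. ?Ds i c0) \<longlongrightarrow> 0) F" using IH[OF c0(1)] c0(2) by simp
      qed simp
      ultimately show ?thesis by simp
    qed
  qed
qed

end

locale weights_perturbation = game_perturbation +
  fixes w and ws
  assumes val_ne: "val \<mu> T \<noteq> \<theta>"
    and valid: "valid_weights dv \<theta> \<mu> T w"
    and valid_seq: "\<forall>\<^sub>F i in F. valid_weights dv \<theta> (\<mu>s i) T (ws i)"
begin

lemma eventually_wins_valid: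
  "\<forall>\<^sub>F i in F. wins \<theta> (\<mu>s i) T = wins \<theta> \<mu> T \<and> valid_weights dv \<theta> (\<mu>s i) T (ws i)"
  using eventually_wins_eq[OF val_ne] valid_seq by (rule eventually_conj)

lemma weights_tendsto_P:
  assumes s: "Node k cs \<in> subtrees T" and P: "(k = MAXnode) = wins \<theta> \<mu> T"
    and pos: "0 < D \<mu> (Node k cs)" and unique: "unique_weights_at \<mu> (Node k cs)"
    and c0: "c0 \<in> set cs" "D \<mu> c0 = D \<mu> (Node k cs)"
    and IH: "\<And>l. l \<in> leaves c0 \<Longrightarrow> ((\<lambda>i. ws i c0 l) \<longlongrightarrow> w c0 l) F"
  shows "((\<lambda>i. ws i (Node k cs) l) \<longlongrightarrow> w (Node k cs) l) F"
proof -
  let ?s = "Node k cs" and ?Ds = "\<lambda>i. dval dv \<theta> (wins \<theta> \<mu> T) (\<mu>s i)"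
  have sub: "c \<in> set cs \<Longrightarrow> c \<in> subtrees T" for c using child_in_subtrees s by blast
  have argmax_unique: "c = c0" if "c \<in> set cs" "D \<mu> c = D \<mu> ?s" for c
    using unique_weights_at_argmax_unique[OF unique s P pos \<mu>_in] c0 that by blast
  have gap: "0 < D \<mu> c0 - D \<mu> c" if "c \<in> set cs - {c0}" for c
  proof -
    have "D \<mu> c \<le> D \<mu> ?s" using P that by simp
    moreover have "D \<mu> c \<noteq> D \<mu> ?s" using argmax_unique that by blast
    ultimately show ?thesis using c0(2) by simp
  qed
  have "\<forall>c\<in>set cs - {c0}. \<forall>\<^sub>F i in F. ?Ds i c < ?Ds i c0"
  proof
    fix c assume c: "c \<in> set cs - {c0}"
    from order_tendstoD(1)[OF tendsto_diff[OF tendsto_dval[OF sub[OF c0(1)]] tendsto_dval[OF sub]] gap[OF c]]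
    show "\<forall>\<^sub>F i in F. ?Ds i c < ?Ds i c0" using c by (auto elim: eventually_mono)
  qed
  then have "\<forall>\<^sub>F i in F. \<forall>c\<in>set cs - {c0}. ?Ds i c < ?Ds i c0"
    by (intro eventually_ball_finite) auto
  moreover have "\<forall>\<^sub>F i in F. 0 < ?Ds i ?s"
    using order_tendstoD(1)[OF tendsto_dval[OF s] pos] .
  ultimately have "\<forall>\<^sub>F i in F. ws i ?s l = (if l \<in> leaves c0 then ws i c0 l else 0)"
    using eventually_wins_valid
  proof eventually_elim
    case (elim i)
    then obtain c where c: "c \<in> set cs" "?Ds i c = ?Ds i ?s"
      "ws i ?s = (\<lambda>m. if m \<in> leaves c then ws i c m else 0)"
      using valid_weights_P[of "\<mu>s i" "ws i", OF _ s] P by auto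
    have "?Ds i c0 \<le> ?Ds i ?s" using P c0(1) by simp
    then have "c = c0" using elim(1) c by (metis DiffI singletonD not_less)
    then show ?case using c(3) by simp
  qed
  moreover have "w ?s l = (if l \<in> leaves c0 then w c0 l else 0)"
    using valid_weights_P[OF valid s P pos] argmax_unique by force
  then have "((\<lambda>i. if l \<in> leaves c0 then ws i c0 l else 0) \<longlongrightarrow> w ?s l) F"
    using IH by simp
  ultimately show ?thesis by (subst tendsto_cong) auto
qed

lemma weights_tendsto_Q:
  assumes s: "Node k cs \<in> subtrees T" and Q: "(k = MAXnode) \<noteq> wins \<theta> \<mu> T"
    and pos: "\<forall>c\<in>set cs. 0 < D \<mu> c" and c: "c \<in> set cs" "l \<in> leaves c"
    and IH: "((\<lambda>i. ws i c l) \<longlongrightarrow> w c l) F"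
  shows "((\<lambda>i. ws i (Node k cs) l) \<longlongrightarrow> w (Node k cs) l) F"
proof -
  let ?Ds = "\<lambda>i. dval dv \<theta> (wins \<theta> \<mu> T) (\<mu>s i)"
  have sub: "c \<in> set cs \<Longrightarrow> c \<in> subtrees T" for c using child_in_subtrees s by blast
  have "\<forall>\<^sub>F i in F. \<forall>c\<in>set cs. 0 < ?Ds i c"
    using order_tendstoD(1)[OF tendsto_dval] sub pos by (intro eventually_ball_finite) auto
  then have "\<forall>\<^sub>F i in F. ws i (Node k cs) l = (ws i c l / ?Ds i c) / (\<Sum>c'\<in>set cs. 1 / ?Ds i c')"
    using eventually_wins_valid
  proof eventually_elim
    case (elim i)
    then show ?case using valid_weights_Q_leaf[of "\<mu>s i" "ws i", OF _ s _ _ c] Q by simp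
  qed
  moreover have "0 < (\<Sum>c'\<in>set cs. 1 / D \<mu> c')"
    using pos children_nonempty[OF s] by (intro sum_pos) auto
  then have "((\<lambda>i. (ws i c l / ?Ds i c) / (\<Sum>c'\<in>set cs. 1 / ?Ds i c')) \<longlongrightarrow> w (Node k cs) l) F"
    unfolding valid_weights_Q_leaf[OF valid s Q pos c]
    using IH pos c(1) tendsto_dval sub by (intro tendsto_divide tendsto_sum tendsto_const) auto
  ultimately show ?thesis by (subst tendsto_cong) auto
qed

lemma weights_tendsto:
  "s \<in> subtrees T \<Longrightarrow> 0 < D \<mu> s \<Longrightarrow> unique_weights_at \<mu> s \<Longrightarrow> l \<in> leaves s \<Longrightarrow>
    ((\<lambda>i. ws i s l) \<longlongrightarrow> w s l) F"
proof (induction s arbitrary: l)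
  case (Leaf l')
  have "\<forall>\<^sub>F i in F. ws i (Leaf l') l = w (Leaf l') l"
    using valid_seq by (rule eventually_mono)
      (simp add: valid_weights_Leaf[OF _ Leaf.prems(1)] valid_weights_Leaf[OF valid Leaf.prems(1)])
  then show ?case by (rule tendsto_eventually)
next
  case (Node k cs)
  have sub: "c \<in> set cs \<Longrightarrow> c \<in> subtrees T" for c using child_in_subtrees Node.prems(1) by blast
  show ?case
  proof (cases "(k = MAXnode) = wins \<theta> \<mu> T")
    case P: True
    obtain c0 where c0: "c0 \<in> set cs" "D \<mu> c0 = D \<mu> (Node k cs)"
      using exists_argmax_child[OF Node.prems(1) P] by blast
    show ?thesis
      using Node.IH[OF c0(1) sub[OF c0(1)]] c0 Node.prems(2)
        unique_weights_at_P_child[OF Node.prems(3,1) P Node.prems(2) \<mu>_in c0]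
      by (intro weights_tendsto_P[OF Node.prems(1) P Node.prems(2,3) c0]) auto
  next
    case Q: False
    have pos: "\<forall>c\<in>set cs. 0 < D \<mu> c"
    proof (rule ccontr)
      assume "\<not> (\<forall>c\<in>set cs. 0 < D \<mu> c)"
      then have "D \<mu> (Node k cs) = 0" using Q by (simp only: dval.simps if_False)
      then show False using Node.prems(2) by simp
    qed
    obtain c where c: "c \<in> set cs" "l \<in> leaves c" using Node.prems(4) by auto
    show ?thesis
      using Node.IH[OF c(1) sub[OF c(1)] _ unique_weights_at_Q_child[OF Node.prems(3,1) Q pos \<mu>_in c(1)] c(2)]
        pos c(1) by (intro weights_tendsto_Q[OF Node.prems(1) Q pos c]) auto
  qed
qed

lemma root_weights_tendsto:
  assumes "\<exists>!w. w \<in> leaf_simplex (leaves T) \<and>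
      (\<forall>w'\<in>leaf_simplex (leaves T). objective dv X \<theta> T \<mu> w' \<le> objective dv X \<theta> T \<mu> w)"
    and "l \<in> leaves T"
  shows "((\<lambda>i. ws i T l) \<longlongrightarrow> w T l) F"
proof (rule weights_tendsto[OF subtrees_refl _ _ assms(2)])
  show "0 < D \<mu> T"
    using dval_pos[OF wf_subtree[OF subtrees_refl] \<mu>_in] val_ne by (auto simp: wins_def)
  show "unique_weights_at \<mu> T" by (rule unique_weights_at_root[OF \<mu>_in assms(1)])
qed

end

context game_divergence
begin

text \<open>The perturbations are organised as a filter on pairs of a mean vector and an admissible
  weight function for it, so that the arbitrary choices of \<open>w'\<close> are absorbed by the filter.\<close>
definition perturbations :: "('l \<Rightarrow> real) \<Rightarrow> (('l \<Rightarrow> real) \<times> ('l gtree \<Rightarrow> 'l \<Rightarrow> real)) filter" where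
  "perturbations \<mu> = (INF \<xi>\<in>{0<..}. principal {(\<mu>', w').
     (\<forall>l\<in>leaves T. \<mu>' l \<in> X \<and> \<mu> l - \<xi> \<le> \<mu>' l \<and> \<mu>' l \<le> \<mu> l + \<xi>) \<and> valid_weights dv \<theta> \<mu>' T w'})"

lemma eventually_perturbations:
  "eventually P (perturbations \<mu>) \<longleftrightarrow> (\<exists>\<xi>>0. \<forall>\<mu>' w'.
     (\<forall>l\<in>leaves T. \<mu>' l \<in> X \<and> \<mu> l - \<xi> \<le> \<mu>' l \<and> \<mu>' l \<le> \<mu> l + \<xi>) \<and> valid_weights dv \<theta> \<mu>' T w' \<longrightarrow>
     P (\<mu>', w'))"
proof -
  let ?S = "\<lambda>\<xi>. {(\<mu>', w'). (\<forall>l\<in>leaves T. \<mu>' l \<in> X \<and> \<mu> l - \<xi> \<le> \<mu>' l \<and> \<mu>' l \<le> \<mu> l + \<xi>) \<and>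
    valid_weights dv \<theta> \<mu>' T w'}"
  have "\<exists>c\<in>{0<..}. principal (?S c) \<le> inf (principal (?S a)) (principal (?S b))"
    if "a \<in> {0<..}" "b \<in> {0<..}" for a b :: real
    using that by (intro bexI[of _ "min a b"]) auto
  then show ?thesis unfolding perturbations_def by (subst eventually_INF_base) (auto simp: eventually_principal)
qed

lemma weights_perturbation_perturbations:
  assumes \<mu>: "\<forall>l\<in>leaves T. \<mu> l \<in> X" and "val \<mu> T \<noteq> \<theta>" and "valid_weights dv \<theta> \<mu> T w"
  shows "weights_perturbation dv X \<theta> T \<mu> fst (perturbations \<mu>) w snd"
proof
  show "\<forall>\<^sub>F p in perturbations \<mu>. \<forall>l\<in>leaves T. fst p l \<in> X"
    and "\<forall>\<^sub>F p in perturbations \<mu>. valid_weights dv \<theta> (fst p) T (snd p)"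
    unfolding eventually_perturbations by (intro exI[of _ 1]; auto)+
  show "((\<lambda>p. fst p l) \<longlongrightarrow> \<mu> l) (perturbations \<mu>)" if "l \<in> leaves T" for l
  proof (rule tendstoI)
    fix e :: real assume "0 < e"
    then show "\<forall>\<^sub>F p in perturbations \<mu>. dist (fst p l) (\<mu> l) < e"
      unfolding eventually_perturbations using that
      by (intro exI[of _ "e / 2"]) (auto simp: dist_real_def)
  qed
qed (use assms in auto)

lemma weights_continuous_at:
  assumes \<mu>: "\<forall>l\<in>leaves T. \<mu> l \<in> X" and val_ne: "val \<mu> T \<noteq> \<theta>"
    and unique: "\<exists>!w. w \<in> leaf_simplex (leaves T) \<and>
      (\<forall>w'\<in>leaf_simplex (leaves T). objective dv X \<theta> T \<mu> w' \<le> objective dv X \<theta> T \<mu> w)"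
    and "0 < \<epsilon>"
  shows "\<exists>\<xi>>0. \<forall>\<mu>'. (\<forall>l\<in>leaves T. \<mu>' l \<in> X \<and> \<mu> l - \<xi> \<le> \<mu>' l \<and> \<mu>' l \<le> \<mu> l + \<xi>) \<longrightarrow>
    (\<forall>w w'. valid_weights dv \<theta> \<mu> T w \<and> valid_weights dv \<theta> \<mu>' T w' \<longrightarrow>
      Max ((\<lambda>l. \<bar>w' T l - w T l\<bar>) ` leaves T) < \<epsilon>)"
proof -
  obtain ch where "argmax_choice (wins \<theta> \<mu> T) \<mu> ch" using exists_argmax_choice by blast
  define w0 where "w0 = choice_weights dv \<theta> (wins \<theta> \<mu> T) \<mu> ch"
  have valid0: "valid_weights dv \<theta> \<mu> T w0"
    unfolding w0_def by (rule choice_weights_valid[OF \<mu>]) fact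
  interpret perturbation: weights_perturbation dv X \<theta> T \<mu> fst "perturbations \<mu>" w0 snd
    by (rule weights_perturbation_perturbations[OF \<mu> val_ne valid0])
  have "\<forall>\<^sub>F p in perturbations \<mu>. \<forall>l\<in>leaves T. \<bar>snd p T l - w0 T l\<bar> < \<epsilon>"
  proof (intro eventually_ball_finite finite_leaves ballI)
    fix l assume "l \<in> leaves T"
    from tendstoD[OF perturbation.root_weights_tendsto[OF unique this] \<open>0 < \<epsilon>\<close>]
    show "\<forall>\<^sub>F p in perturbations \<mu>. \<bar>snd p T l - w0 T l\<bar> < \<epsilon>" by (simp add: dist_real_def)
  qed
  then obtain \<xi> where "0 < \<xi>" and \<xi>: "\<And>\<mu>' w'. (\<forall>l\<in>leaves T. \<mu>' l \<in> X \<and> \<mu> l - \<xi> \<le> \<mu>' l \<and> \<mu>' l \<le> \<mu> l + \<xi>) \<Longrightarrow>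
      valid_weights dv \<theta> \<mu>' T w' \<Longrightarrow> \<forall>l\<in>leaves T. \<bar>w' T l - w0 T l\<bar> < \<epsilon>"
    unfolding eventually_perturbations by auto
  moreover have "w T = w0 T" if "valid_weights dv \<theta> \<mu> T w" for w
    using unique_weights_at_root[OF \<mu> unique] valid0 that unfolding unique_weights_at_def by blast
  ultimately show ?thesis
    using finite_leaves[of T] leaves_nonempty[OF wf_subtree[OF subtrees_refl]] by (intro exI[of _ \<xi>]) auto
qed

end

theorem lemma6:
  fixes N :: "real measure" and \<Theta> :: "real set" and \<theta> :: real
    and T :: "'l gtree" and \<mu> :: "'l \<Rightarrow> real"
  assumes "expfam N \<Theta>"
    and "\<theta> \<in> mean_set N \<Theta>"
    and "game_tree T"
    and "\<forall>l\<in>leaves T. \<mu> l \<in> mean_set N \<Theta>"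
    and "val \<mu> T \<noteq> \<theta>"
    and "\<exists>!w. w \<in> leaf_simplex (leaves T) \<and>
           (\<forall>w'\<in>leaf_simplex (leaves T).
              objective (KL N \<Theta>) (mean_set N \<Theta>) \<theta> T \<mu> w'
                \<le> objective (KL N \<Theta>) (mean_set N \<Theta>) \<theta> T \<mu> w)"
  shows "\<forall>\<epsilon>>0. \<exists>\<xi>>0. \<forall>\<mu>'.
           (\<forall>l\<in>leaves T. \<mu>' l \<in> mean_set N \<Theta> \<and> \<mu> l - \<xi> \<le> \<mu>' l \<and> \<mu>' l \<le> \<mu> l + \<xi>) \<longrightarrow>
           (\<forall>w w'. valid_weights (KL N \<Theta>) \<theta> \<mu> T w \<and> valid_weights (KL N \<Theta>) \<theta> \<mu>' T w' \<longrightarrow>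
              Max ((\<lambda>l. \<bar>w' T l - w T l\<bar>) ` leaves T) < \<epsilon>)"
proof -
  interpret exp_family N \<Theta> by (rule exp_family.intro) fact
  interpret game_divergence "KL N \<Theta>" "mean_set N \<Theta>" \<theta> T
    using assms(2,3) KL_self KL_pos KL_mono_above KL_mono_below
      KL_approx_from_below[OF _ assms(2)] continuous_on_KL_left[OF assms(2)]
    by unfold_locales auto
  show ?thesis using weights_continuous_at[OF assms(4-6)] by blast
qed

end
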